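(* For every $q\in\mathbb{Z}$, the group $BS(1,q)$ admits a one-counter left-order, and $BS(1,q)$ admits a regular left-order if and only if $q\geq -1$. Moreover, for $q\geq 2$, every regular left-order on $BS(1,q)$ is induced by the affine action of $BS(1,q)$ on $\mathbb{R}$ given by $a\colon x\mapsto qx$, $b\colon x\mapsto x+1$.
   Context: For $q\neq 0$, $BS(1,q)=\langle a,b\mid aba^{-1}=b^q\rangle$; by convention $BS(1,0)=\mathbb{Z}$. A left-order on a group $G$ is a total order invariant under left multiplication, with positive cone $P=\{g: 1\prec g\}$. For a class of languages $\mathcal{C}$, a left-order on a finitely generated group is a $\mathcal{C}$-left-order if there is a finite set $X$, a surjective monoid homomorphism $\pi\colon X^*\to G$ and a language $\mathcal{L}\subseteq X^*$ in $\mathcal{C}$ with $\pi(\mathcal{L})=P$. "Regular" means $\mathcal{C}$ is the class of languages accepted by finite state automata; "one-counter" means $\mathcal{C}$ is the class of languages accepted by nondeterministic pushdown automata with a single stack symbol. The map $a\mapsto(x\mapsto qx)$, $b\mapsto(x\mapsto x+1)$ defines a faithful action $\rho$ of $BS(1,q)$ ($q\ge 2$) on $\mathbb{R}$ by increasing affine maps; a left-order $\prec$ is said to be induced by this action if there is a point $x\in\mathbb{R}$ such that either for all $g$ with $\rho(g)(x)\neq x$ one has $1\prec g\iff \rho(g)(x)>x$, or for all such $g$ one has $1\prec g\iff\rho(g)(x)<x$. *)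

theory Defs
  imports Complex_Main "HOL-Algebra.Group"
begin

datatype gen = Ga | Gai | Gb | Gbi

fun gen_inv :: "gen \<Rightarrow> gen" where
  "gen_inv Ga = Gai" | "gen_inv Gai = Ga" | "gen_inv Gb = Gbi" | "gen_inv Gbi = Gb"

definition bpow :: "int \<Rightarrow> gen list" where
  "bpow q = (if 0 \<le> q then replicate (nat q) Gb else replicate (nat (- q)) Gbi)"

text \<open>The congruence on words defining the group with presentation
  < a, b | a b a^-1 = b^q >.  For q = 0 this gives Z, matching the convention BS(1,0) = Z.\<close>
inductive bs_eq :: "int \<Rightarrow> gen list \<Rightarrow> gen list \<Rightarrow> bool" for q where
  bs_refl: "bs_eq q u u"
| bs_sym: "bs_eq q u v \<Longrightarrow> bs_eq q v u"
| bs_trans: "bs_eq q u v \<Longrightarrow> bs_eq q v w \<Longrightarrow> bs_eq q u w"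
| bs_free: "bs_eq q (u @ [x, gen_inv x] @ v) (u @ v)"
| bs_rel: "bs_eq q (u @ [Ga, Gb, Gai] @ v) (u @ bpow q @ v)"

definition bs_class :: "int \<Rightarrow> gen list \<Rightarrow> gen list set" where
  "bs_class q u = {v. bs_eq q u v}"

definition BS :: "int \<Rightarrow> gen list set monoid" where
  "BS q = \<lparr> carrier = range (bs_class q),
            mult = (\<lambda>X Y. bs_class q ((SOME u. u \<in> X) @ (SOME v. v \<in> Y))),
            one = bs_class q [] \<rparr>"

definition left_order :: "('a, 'b) monoid_scheme \<Rightarrow> ('a \<Rightarrow> 'a \<Rightarrow> bool) \<Rightarrow> bool" where
  "left_order G R \<longleftrightarrow>
     (\<forall>x y. R x y \<longrightarrow> x \<in> carrier G \<and> y \<in> carrier G) \<and>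
     (\<forall>x\<in>carrier G. \<not> R x x) \<and>
     (\<forall>x\<in>carrier G. \<forall>y\<in>carrier G. \<forall>z\<in>carrier G. R x y \<longrightarrow> R y z \<longrightarrow> R x z) \<and>
     (\<forall>x\<in>carrier G. \<forall>y\<in>carrier G. x = y \<or> R x y \<or> R y x) \<and>
     (\<forall>g\<in>carrier G. \<forall>x\<in>carrier G. \<forall>y\<in>carrier G. R x y \<longrightarrow> R (g \<otimes>\<^bsub>G\<^esub> x) (g \<otimes>\<^bsub>G\<^esub> y))"

definition positive_cone :: "('a, 'b) monoid_scheme \<Rightarrow> ('a \<Rightarrow> 'a \<Rightarrow> bool) \<Rightarrow> 'a set" where
  "positive_cone G R = {g \<in> carrier G. R \<one>\<^bsub>G\<^esub> g}"

text \<open>A language class is a predicate on (alphabet, language); alphabets are finite sets of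
  natural numbers (w.l.o.g.), words are lists.\<close>
definition C_left_order ::
  "(nat set \<Rightarrow> nat list set \<Rightarrow> bool) \<Rightarrow> ('a, 'b) monoid_scheme \<Rightarrow> ('a \<Rightarrow> 'a \<Rightarrow> bool) \<Rightarrow> bool" where
  "C_left_order C G R \<longleftrightarrow> left_order G R \<and>
     (\<exists>(X :: nat set) (\<pi> :: nat list \<Rightarrow> 'a) L.
        finite X \<and>
        \<pi> [] = \<one>\<^bsub>G\<^esub> \<and>
        (\<forall>u\<in>lists X. \<forall>v\<in>lists X. \<pi> (u @ v) = \<pi> u \<otimes>\<^bsub>G\<^esub> \<pi> v) \<and>
        \<pi> ` lists X = carrier G \<and>
        L \<subseteq> lists X \<and> C X L \<and> \<pi> ` L = positive_cone G R)"

definition admits_C_left_order ::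
  "(nat set \<Rightarrow> nat list set \<Rightarrow> bool) \<Rightarrow> ('a, 'b) monoid_scheme \<Rightarrow> bool" where
  "admits_C_left_order C G \<longleftrightarrow> (\<exists>R. C_left_order C G R)"

inductive nfa_run :: "(nat \<times> nat \<times> nat) set \<Rightarrow> nat \<Rightarrow> nat list \<Rightarrow> nat \<Rightarrow> bool" for D where
  nfa_nil: "nfa_run D p [] p"
| nfa_step: "(p, x, p') \<in> D \<Longrightarrow> nfa_run D p' w r \<Longrightarrow> nfa_run D p (x # w) r"

definition regular_lang :: "nat set \<Rightarrow> nat list set \<Rightarrow> bool" where
  "regular_lang X L \<longleftrightarrow>
     (\<exists>(Q :: nat set) I F D. finite Q \<and> I \<subseteq> Q \<and> F \<subseteq> Q \<and> D \<subseteq> Q \<times> X \<times> Q \<and>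
        L = {w \<in> lists X. \<exists>p\<in>I. \<exists>r\<in>F. nfa_run D p w r})"

text \<open>Nondeterministic pushdown automaton whose stack alphabet consists of a single symbol
  (plus the bottom-of-stack marker).  The stack content is thus a natural number n (the
  number of copies of the symbol above the bottom marker).  A transition
  (p, s, z, p', k) reads s (an input letter, or nothing if s = None) in state p; if z then the
  top of the stack must be the bottom marker (n = 0), which is kept, and k symbols are pushed
  (new counter k); otherwise the top must be the stack symbol (n > 0), it is popped and k
  symbols are pushed (new counter n - 1 + k).\<close>
type_synonym oc_trans = "nat \<times> nat option \<times> bool \<times> nat \<times> nat"

inductive oc_run :: "oc_trans set \<Rightarrow> nat \<Rightarrow> nat \<Rightarrow> nat list \<Rightarrow> nat \<Rightarrow> nat \<Rightarrow> bool" for D where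
  oc_nil: "oc_run D p n [] p n"
| oc_read_zero: "(p, Some x, True, p', k) \<in> D \<Longrightarrow> oc_run D p' k w r m \<Longrightarrow> oc_run D p 0 (x # w) r m"
| oc_read_pos: "(p, Some x, False, p', k) \<in> D \<Longrightarrow> oc_run D p' (n + k) w r m \<Longrightarrow> oc_run D p (Suc n) (x # w) r m"
| oc_eps_zero: "(p, None, True, p', k) \<in> D \<Longrightarrow> oc_run D p' k w r m \<Longrightarrow> oc_run D p 0 w r m"
| oc_eps_pos: "(p, None, False, p', k) \<in> D \<Longrightarrow> oc_run D p' (n + k) w r m \<Longrightarrow> oc_run D p (Suc n) w r m"

definition one_counter_lang :: "nat set \<Rightarrow> nat list set \<Rightarrow> bool" where
  "one_counter_lang X L \<longleftrightarrow>
     (\<exists>(Q :: nat set) p0 F (D :: oc_trans set). finite Q \<and> p0 \<in> Q \<and> F \<subseteq> Q \<and> finite D \<and>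
        (\<forall>(p, s, z, p', k)\<in>D. p \<in> Q \<and> p' \<in> Q \<and> (\<forall>x. s = Some x \<longrightarrow> x \<in> X)) \<and>
        L = {w \<in> lists X. \<exists>r\<in>F. \<exists>m. oc_run D p0 0 w r m})"

fun gen_act :: "int \<Rightarrow> gen \<Rightarrow> real \<Rightarrow> real" where
  "gen_act q Ga x = of_int q * x"
| "gen_act q Gai x = x / of_int q"
| "gen_act q Gb x = x + 1"
| "gen_act q Gbi x = x - 1"

fun word_act :: "int \<Rightarrow> gen list \<Rightarrow> real \<Rightarrow> real" where
  "word_act q [] x = x"
| "word_act q (c # w) x = gen_act q c (word_act q w x)"

definition bs_act :: "int \<Rightarrow> gen list set \<Rightarrow> real \<Rightarrow> real" where
  "bs_act q g = word_act q (SOME w. w \<in> g)"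

definition induced_by_affine_action :: "int \<Rightarrow> (gen list set \<Rightarrow> gen list set \<Rightarrow> bool) \<Rightarrow> bool" where
  "induced_by_affine_action q R \<longleftrightarrow>
     (\<exists>x::real.
        (\<forall>g\<in>carrier (BS q). bs_act q g x \<noteq> x \<longrightarrow> (R \<one>\<^bsub>BS q\<^esub> g \<longleftrightarrow> bs_act q g x > x)) \<or>
        (\<forall>g\<in>carrier (BS q). bs_act q g x \<noteq> x \<longrightarrow> (R \<one>\<^bsub>BS q\<^esub> g \<longleftrightarrow> bs_act q g x < x)))"

end

theory Submission
  imports Defs
begin

text \<open>For q \<noteq> 0 an element of BS(1,q) is determined by its exponent sum in a and the
  translation part of its affine action, a number in Z[1/q].  Elements of exponent 0 whose
  translations have the same sign have a common power, so on them a left order is determined by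
  the sign of b.  For q < 0 conjugation by an element of odd exponent reverses the sign of
  translations, which forces the positive cone of any left order into one of the half-spaces
  of nonnegative or nonpositive exponent.  For q \<ge> 2 the same holds unless the order is
  induced by the action at the supremum of the fixed points of the positive expanding
  elements.

  A regular positive cone contains, for every M, an element of exponent 0 and translation
  \<plusminus>q^-M.  A word for it must have prefixes of very negative exponent, as otherwise its
  translation would have a denominator dividing a bounded power of q; so the automaton runs
  through a loop of negative exponent, and pumping that loop in and out yields positive
  elements of both signs of exponent.  Hence no regular positive cone lies in a half-space.
  Explicit finite and one-counter automata give the remaining cones.\<close>

section \<open>The group BS(1,q)\<close>

lemma bs_eq_in_context: "bs_eq q u v \<Longrightarrow> bs_eq q (x @ u @ y) (x @ v @ y)"
proof (induction rule: bs_eq.induct)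
  case (bs_free u c v)
  have "bs_eq q ((x @ u) @ [c, gen_inv c] @ (v @ y)) ((x @ u) @ (v @ y))" by (rule bs_eq.bs_free)
  thus ?case by simp
next
  case (bs_rel u v)
  have "bs_eq q ((x @ u) @ [Ga, Gb, Gai] @ (v @ y)) ((x @ u) @ bpow q @ (v @ y))" by (rule bs_eq.bs_rel)
  thus ?case by simp
qed (blast intro: bs_eq.bs_refl bs_eq.bs_sym bs_eq.bs_trans)+

lemma bs_eq_append: "bs_eq q u u' \<Longrightarrow> bs_eq q v v' \<Longrightarrow> bs_eq q (u @ v) (u' @ v')"
  using bs_eq_in_context[of q u u' "[]" v] bs_eq_in_context[of q v v' u' "[]"]
  by (auto intro: bs_eq.bs_trans)

lemma bs_class_eq_iff: "bs_class q u = bs_class q v \<longleftrightarrow> bs_eq q u v"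
  unfolding bs_class_def by (auto intro: bs_eq.intros dest: bs_eq.bs_sym)

lemma bs_eq_some_in_class: "bs_eq q w (SOME u. u \<in> bs_class q w)"
proof -
  have "w \<in> bs_class q w" by (simp add: bs_class_def bs_eq.bs_refl)
  hence "(SOME u. u \<in> bs_class q w) \<in> bs_class q w" by (rule someI)
  thus ?thesis by (simp add: bs_class_def)
qed

lemma BS_carrier: "carrier (BS q) = range (bs_class q)"
  by (simp add: BS_def)

lemma BS_one: "\<one>\<^bsub>BS q\<^esub> = bs_class q []"
  by (simp add: BS_def)

lemma BS_mult: "bs_class q u \<otimes>\<^bsub>BS q\<^esub> bs_class q v = bs_class q (u @ v)"
proof -
  have "bs_eq q ((SOME u'. u' \<in> bs_class q u) @ (SOME v'. v' \<in> bs_class q v)) (u @ v)"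
    by (rule bs_eq_append; rule bs_eq.bs_sym; rule bs_eq_some_in_class)
  thus ?thesis by (simp add: BS_def bs_class_eq_iff)
qed

lemma bs_class_in_carrier [simp]: "bs_class q w \<in> carrier (BS q)"
  by (simp add: BS_carrier)

lemma gen_inv_gen_inv [simp]: "gen_inv (gen_inv c) = c"
  by (cases c) auto

lemma bs_eq_inverse_word: "bs_eq q (rev (map gen_inv w) @ w) []"
proof (induction w)
  case (Cons c w)
  have "bs_eq q (rev (map gen_inv w) @ [gen_inv c, gen_inv (gen_inv c)] @ w) (rev (map gen_inv w) @ w)"
    by (rule bs_eq.bs_free)
  thus ?case using Cons.IH by (auto intro: bs_eq.bs_trans)
qed (simp add: bs_eq.bs_refl)

lemma group_BS: "group (BS q)"
proof (rule groupI)
  fix x assume "x \<in> carrier (BS q)"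
  then obtain u where x: "x = bs_class q u" by (auto simp: BS_carrier)
  have "bs_class q (rev (map gen_inv u)) \<otimes>\<^bsub>BS q\<^esub> x = \<one>\<^bsub>BS q\<^esub>"
    using bs_eq_inverse_word[of q u] by (simp add: x BS_mult BS_one bs_class_eq_iff)
  thus "\<exists>y\<in>carrier (BS q). y \<otimes>\<^bsub>BS q\<^esub> x = \<one>\<^bsub>BS q\<^esub>" by auto
qed (auto simp: BS_carrier BS_one BS_mult)

interpretation BS: group "BS q" for q
  by (rule group_BS)

section \<open>Exponent sum and the affine action\<close>

fun gen_exp :: "gen \<Rightarrow> int" where
  "gen_exp Ga = 1" | "gen_exp Gai = -1" | "gen_exp Gb = 0" | "gen_exp Gbi = 0"

definition word_exp :: "gen list \<Rightarrow> int" where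
  "word_exp w = sum_list (map gen_exp w)"

lemma word_exp_simps [simp]:
  "word_exp [] = 0" "word_exp (c # w) = gen_exp c + word_exp w"
  "word_exp (u @ v) = word_exp u + word_exp v" "word_exp (replicate n c) = int n * gen_exp c"
  by (simp_all add: word_exp_def sum_list_replicate)

lemma word_exp_bpow [simp]: "word_exp (bpow k) = 0"
  by (simp add: bpow_def)

lemma gen_exp_gen_inv [simp]: "gen_exp (gen_inv c) = - gen_exp c"
  by (cases c) auto

lemma bs_eq_word_exp: "bs_eq q u v \<Longrightarrow> word_exp u = word_exp v"
  by (induction rule: bs_eq.induct) auto

lemma word_act_append [simp]: "word_act q (u @ v) x = word_act q u (word_act q v x)"
  by (induction u) auto

lemma word_act_replicate [simp]:
  "word_act q (replicate n Ga) 0 = 0"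
  "word_act q (replicate n Gai) x = x / of_int q ^ n"
  "word_act q (replicate n Gb) x = x + of_nat n"
  "word_act q (replicate n Gbi) x = x - of_nat n"
  by (induction n) auto

lemma word_act_bpow [simp]: "word_act q (bpow k) x = x + of_int k"
  by (simp add: bpow_def)

lemma word_act_affine: "q \<noteq> 0 \<Longrightarrow> word_act q w x = of_int q powi word_exp w * x + word_act q w 0"
proof (induction w arbitrary: x)
  case (Cons c w)
  have q: "(of_int q :: real) \<noteq> 0" using Cons.prems by simp
  have IH: "word_act q w x = of_int q powi word_exp w * x + word_act q w 0"
    using Cons by blast
  show ?case
  proof (cases c)
    case Ga
    thus ?thesis using IH q by (simp add: power_int_add algebra_simps)
  next
    case Gai
    have "(of_int q :: real) powi (word_exp w - 1) = of_int q powi word_exp w / of_int q"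
      using q by (simp add: power_int_diff)
    thus ?thesis using IH Gai by (simp add: add_divide_distrib)
  qed (use IH in simp_all)
qed simp

lemma gen_act_gen_inv: "q \<noteq> 0 \<Longrightarrow> gen_act q c (gen_act q (gen_inv c) x) = x"
  by (cases c) auto

lemma bs_eq_word_act: "bs_eq q u v \<Longrightarrow> q \<noteq> 0 \<Longrightarrow> word_act q u = word_act q v"
proof (induction rule: bs_eq.induct)
  case (bs_free u c v)
  thus ?case by (simp add: gen_act_gen_inv fun_eq_iff)
next
  case (bs_rel u v)
  thus ?case by (simp add: fun_eq_iff distrib_left)
qed auto

definition bs_exp :: "gen list set \<Rightarrow> int" where
  "bs_exp g = word_exp (SOME w. w \<in> g)"

definition bs_transl :: "int \<Rightarrow> gen list set \<Rightarrow> real" where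
  "bs_transl q g = bs_act q g 0"

lemma bs_exp_class [simp]: "bs_exp (bs_class q w) = word_exp w"
  using bs_eq_word_exp[OF bs_eq_some_in_class[of q w]] by (simp add: bs_exp_def)

lemma bs_act_class [simp]: "q \<noteq> 0 \<Longrightarrow> bs_act q (bs_class q w) = word_act q w"
  using bs_eq_word_act[OF bs_eq_some_in_class[of q w]] by (simp add: bs_act_def)

lemma bs_transl_class [simp]: "q \<noteq> 0 \<Longrightarrow> bs_transl q (bs_class q w) = word_act q w 0"
  by (simp add: bs_transl_def)

lemma bs_act_affine: "q \<noteq> 0 \<Longrightarrow> bs_act q g x = of_int q powi bs_exp g * x + bs_transl q g"
  unfolding bs_act_def bs_exp_def bs_transl_def by (rule word_act_affine)

lemma bs_exp_mult: "g \<in> carrier (BS q) \<Longrightarrow> h \<in> carrier (BS q) \<Longrightarrow> bs_exp (g \<otimes>\<^bsub>BS q\<^esub> h) = bs_exp g + bs_exp h"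
  by (auto simp: BS_carrier BS_mult)

lemma bs_act_mult: "q \<noteq> 0 \<Longrightarrow> g \<in> carrier (BS q) \<Longrightarrow> h \<in> carrier (BS q) \<Longrightarrow>
    bs_act q (g \<otimes>\<^bsub>BS q\<^esub> h) x = bs_act q g (bs_act q h x)"
  by (auto simp: BS_carrier BS_mult)

lemma bs_transl_mult: "q \<noteq> 0 \<Longrightarrow> g \<in> carrier (BS q) \<Longrightarrow> h \<in> carrier (BS q) \<Longrightarrow>
    bs_transl q (g \<otimes>\<^bsub>BS q\<^esub> h) = bs_transl q g + of_int q powi bs_exp g * bs_transl q h"
  unfolding bs_transl_def by (simp add: bs_act_mult bs_act_affine[of _ g "bs_act q h 0"] bs_transl_def)

lemma bs_exp_one [simp]: "bs_exp \<one>\<^bsub>BS q\<^esub> = 0"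
  by (simp add: BS_one)

lemma bs_act_one [simp]: "q \<noteq> 0 \<Longrightarrow> bs_act q \<one>\<^bsub>BS q\<^esub> x = x"
  by (simp add: BS_one)

lemma bs_transl_one [simp]: "q \<noteq> 0 \<Longrightarrow> bs_transl q \<one>\<^bsub>BS q\<^esub> = 0"
  by (simp add: bs_transl_def)

lemma bs_exp_inv: "g \<in> carrier (BS q) \<Longrightarrow> bs_exp (inv\<^bsub>BS q\<^esub> g) = - bs_exp g"
  using bs_exp_mult[where q=q and g="inv\<^bsub>BS q\<^esub> g" and h=g] by simp

lemma bs_act_inv:
  assumes "q \<noteq> 0" "g \<in> carrier (BS q)"
  shows "bs_act q (inv\<^bsub>BS q\<^esub> g) (bs_act q g x) = x" "bs_act q g (bs_act q (inv\<^bsub>BS q\<^esub> g) x) = x"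
  using assms by (simp_all flip: bs_act_mult)

lemma bs_transl_inv: "q \<noteq> 0 \<Longrightarrow> g \<in> carrier (BS q) \<Longrightarrow>
    bs_transl q (inv\<^bsub>BS q\<^esub> g) = - (of_int q powi (- bs_exp g)) * bs_transl q g"
  using bs_transl_mult[where q=q and g="inv\<^bsub>BS q\<^esub> g" and h=g] by (simp add: bs_exp_inv)

lemma bs_exp_pow: "g \<in> carrier (BS q) \<Longrightarrow> bs_exp (g [^]\<^bsub>BS q\<^esub> (n::nat)) = int n * bs_exp g"
  by (induction n) (simp_all add: bs_exp_mult algebra_simps)

lemma bs_transl_pow: "q \<noteq> 0 \<Longrightarrow> g \<in> carrier (BS q) \<Longrightarrow> bs_exp g = 0 \<Longrightarrow>
    bs_transl q (g [^]\<^bsub>BS q\<^esub> (n::nat)) = of_nat n * bs_transl q g"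
  by (induction n) (simp_all add: bs_transl_mult bs_exp_pow algebra_simps)

lemma bs_act_pow_fixed:
  assumes "q \<noteq> 0" "g \<in> carrier (BS q)" "bs_act q g x = x"
  shows "bs_act q (g [^]\<^bsub>BS q\<^esub> (n::nat)) x = x"
proof (induction n)
  case (Suc n)
  thus ?case using assms bs_act_mult[of q "g [^]\<^bsub>BS q\<^esub> n" g x] by simp
qed (use assms in simp)

section \<open>Normal form and faithfulness of the affine action\<close>

abbreviation bs_a :: "int \<Rightarrow> gen list set" where "bs_a q \<equiv> bs_class q [Ga]"
abbreviation bs_b :: "int \<Rightarrow> gen list set" where "bs_b q \<equiv> bs_class q [Gb]"

lemma bs_class_replicate: "bs_class q (replicate n c) = bs_class q [c] [^]\<^bsub>BS q\<^esub> n"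
proof (induction n)
  case (Suc n)
  have "bs_class q (replicate (Suc n) c) = bs_class q (replicate n c) \<otimes>\<^bsub>BS q\<^esub> bs_class q [c]"
    by (simp add: BS_mult replicate_append_same)
  thus ?case using Suc by simp
qed (simp add: BS_one)

lemma bs_class_gen_inv: "bs_class q [gen_inv c] = inv\<^bsub>BS q\<^esub> (bs_class q [c])"
proof -
  have "bs_eq q ([] @ [gen_inv c, gen_inv (gen_inv c)] @ []) ([] @ [])" by (rule bs_eq.bs_free)
  hence "bs_class q [gen_inv c] \<otimes>\<^bsub>BS q\<^esub> bs_class q [c] = \<one>\<^bsub>BS q\<^esub>"
    by (simp add: BS_mult BS_one bs_class_eq_iff)
  thus ?thesis by (simp add: BS.inv_equality)
qed

lemma bs_class_bpow: "bs_class q (bpow k) = bs_b q [^]\<^bsub>BS q\<^esub> k"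
proof (cases "0 \<le> k")
  case False
  have "bs_class q (bpow k) = inv\<^bsub>BS q\<^esub> (bs_b q) [^]\<^bsub>BS q\<^esub> nat (- k)"
    using False bs_class_gen_inv[of q Gb] by (simp add: bpow_def bs_class_replicate)
  thus ?thesis using False by (simp add: BS.int_pow_inv flip: BS.int_pow_neg)
qed (unfold bpow_def int_pow_def2, simp add: bs_class_replicate)

lemma bs_relation: "bs_a q \<otimes>\<^bsub>BS q\<^esub> bs_b q \<otimes>\<^bsub>BS q\<^esub> inv\<^bsub>BS q\<^esub> (bs_a q) = bs_b q [^]\<^bsub>BS q\<^esub> q"
proof -
  have "bs_eq q ([] @ [Ga, Gb, Gai] @ []) ([] @ bpow q @ [])" by (rule bs_eq.bs_rel)
  hence "bs_class q [Ga, Gb, Gai] = bs_class q (bpow q)" by (simp add: bs_class_eq_iff)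
  moreover have "bs_a q \<otimes>\<^bsub>BS q\<^esub> bs_b q \<otimes>\<^bsub>BS q\<^esub> bs_class q [Gai] = bs_class q [Ga, Gb, Gai]"
    by (simp add: BS_mult)
  ultimately show ?thesis using bs_class_gen_inv[of q Ga] by (simp add: bs_class_bpow)
qed

lemma (in group) inv_mult_cancel_left [simp]: "x \<in> carrier G \<Longrightarrow> y \<in> carrier G \<Longrightarrow> inv x \<otimes> (x \<otimes> y) = y"
  by (simp flip: m_assoc)

lemma (in group) mult_inv_cancel_left [simp]: "x \<in> carrier G \<Longrightarrow> y \<in> carrier G \<Longrightarrow> x \<otimes> (inv x \<otimes> y) = y"
  by (simp flip: m_assoc)

lemma (in group) conj_int_pow:
  assumes "g \<in> carrier G" "x \<in> carrier G"
  shows "g \<otimes> x [^] (k::int) \<otimes> inv g = (g \<otimes> x \<otimes> inv g) [^] k"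
proof -
  have "(\<lambda>x. g \<otimes> x \<otimes> inv g) \<in> hom G G"
  proof (rule homI)
    fix x y assume "x \<in> carrier G" "y \<in> carrier G"
    thus "g \<otimes> (x \<otimes> y) \<otimes> inv g = g \<otimes> x \<otimes> inv g \<otimes> (g \<otimes> y \<otimes> inv g)"
      using assms(1) by (simp add: m_assoc)
  qed (use assms(1) in simp)
  from hom_int_pow[OF this assms(2) is_group is_group, of k] show ?thesis by simp
qed

lemma bs_conj_a_pow:
  "bs_a q [^]\<^bsub>BS q\<^esub> (m::nat) \<otimes>\<^bsub>BS q\<^esub> bs_b q [^]\<^bsub>BS q\<^esub> k \<otimes>\<^bsub>BS q\<^esub> inv\<^bsub>BS q\<^esub> (bs_a q [^]\<^bsub>BS q\<^esub> m)
     = bs_b q [^]\<^bsub>BS q\<^esub> (q ^ m * k)"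
proof -
  let ?a = "bs_a q" and ?b = "bs_b q"
  have conj_b: "?a [^]\<^bsub>BS q\<^esub> m \<otimes>\<^bsub>BS q\<^esub> ?b \<otimes>\<^bsub>BS q\<^esub> inv\<^bsub>BS q\<^esub> (?a [^]\<^bsub>BS q\<^esub> m)
     = ?b [^]\<^bsub>BS q\<^esub> (q ^ m)"
  proof (induction m)
    case (Suc m)
    have "?a [^]\<^bsub>BS q\<^esub> Suc m \<otimes>\<^bsub>BS q\<^esub> ?b \<otimes>\<^bsub>BS q\<^esub> inv\<^bsub>BS q\<^esub> (?a [^]\<^bsub>BS q\<^esub> Suc m)
        = ?a \<otimes>\<^bsub>BS q\<^esub> (?a [^]\<^bsub>BS q\<^esub> m \<otimes>\<^bsub>BS q\<^esub> ?b \<otimes>\<^bsub>BS q\<^esub> inv\<^bsub>BS q\<^esub> (?a [^]\<^bsub>BS q\<^esub> m)) \<otimes>\<^bsub>BS q\<^esub> inv\<^bsub>BS q\<^esub> ?a"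
      by (simp add: BS.nat_pow_Suc2 BS.inv_mult_group BS.m_assoc del: nat_pow_Suc BS.nat_pow_Suc)
    also have "\<dots> = (?a \<otimes>\<^bsub>BS q\<^esub> ?b \<otimes>\<^bsub>BS q\<^esub> inv\<^bsub>BS q\<^esub> ?a) [^]\<^bsub>BS q\<^esub> (q ^ m)"
      unfolding Suc.IH by (rule BS.conj_int_pow) simp_all
    also have "\<dots> = ?b [^]\<^bsub>BS q\<^esub> (q ^ Suc m)"
      by (simp add: bs_relation BS.int_pow_pow)
    finally show ?case .
  qed simp
  have "?a [^]\<^bsub>BS q\<^esub> m \<otimes>\<^bsub>BS q\<^esub> ?b [^]\<^bsub>BS q\<^esub> k \<otimes>\<^bsub>BS q\<^esub> inv\<^bsub>BS q\<^esub> (?a [^]\<^bsub>BS q\<^esub> m)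
     = (?b [^]\<^bsub>BS q\<^esub> (q ^ m)) [^]\<^bsub>BS q\<^esub> k"
    unfolding conj_b[symmetric] by (rule BS.conj_int_pow) simp_all
  thus ?thesis by (simp add: BS.int_pow_pow)
qed

definition nf_word :: "nat \<Rightarrow> int \<Rightarrow> nat \<Rightarrow> gen list" where
  "nf_word m k m' = replicate m Gai @ bpow k @ replicate m' Ga"

lemma bs_class_nf_word: "bs_class q (nf_word m k m') =
    inv\<^bsub>BS q\<^esub> (bs_a q [^]\<^bsub>BS q\<^esub> m) \<otimes>\<^bsub>BS q\<^esub> (bs_b q [^]\<^bsub>BS q\<^esub> k \<otimes>\<^bsub>BS q\<^esub> bs_a q [^]\<^bsub>BS q\<^esub> m')"
  using bs_class_gen_inv[of q Ga]
  by (simp add: nf_word_def bs_class_replicate bs_class_bpow BS.nat_pow_inv flip: BS_mult)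

lemma word_exp_nf_word [simp]: "word_exp (nf_word m k m') = int m' - int m"
  by (simp add: nf_word_def)

lemma word_act_nf_word: "q \<noteq> 0 \<Longrightarrow> word_act q (nf_word m k m') 0 = of_int k * of_int q powi (- int m)"
  by (simp add: nf_word_def power_int_minus divide_inverse)

lemma bs_b_pow_mult_nf_word:
  "bs_b q [^]\<^bsub>BS q\<^esub> j \<otimes>\<^bsub>BS q\<^esub> bs_class q (nf_word m k m') = bs_class q (nf_word m (q ^ m * j + k) m')"
proof -
  have "bs_b q [^]\<^bsub>BS q\<^esub> j \<otimes>\<^bsub>BS q\<^esub> inv\<^bsub>BS q\<^esub> (bs_a q [^]\<^bsub>BS q\<^esub> m)
      = inv\<^bsub>BS q\<^esub> (bs_a q [^]\<^bsub>BS q\<^esub> m) \<otimes>\<^bsub>BS q\<^esub> bs_b q [^]\<^bsub>BS q\<^esub> (q ^ m * j)"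
    by (simp add: BS.m_assoc flip: bs_conj_a_pow)
  thus ?thesis by (simp add: bs_class_nf_word BS.int_pow_mult flip: BS.m_assoc)
qed

lemma gen_mult_nf_word: "\<exists>m1 k1 m1'. bs_class q [c] \<otimes>\<^bsub>BS q\<^esub> bs_class q (nf_word m k m') = bs_class q (nf_word m1 k1 m1')"
proof (cases c)
  case Ga
  show ?thesis
  proof (cases m)
    case 0
    have "bs_b q [^]\<^bsub>BS q\<^esub> (q * k) \<otimes>\<^bsub>BS q\<^esub> bs_a q
        = bs_a q \<otimes>\<^bsub>BS q\<^esub> bs_b q [^]\<^bsub>BS q\<^esub> k \<otimes>\<^bsub>BS q\<^esub> inv\<^bsub>BS q\<^esub> (bs_a q) \<otimes>\<^bsub>BS q\<^esub> bs_a q"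
      using bs_conj_a_pow[of q 1 k] by simp
    hence "bs_a q \<otimes>\<^bsub>BS q\<^esub> bs_b q [^]\<^bsub>BS q\<^esub> k = bs_b q [^]\<^bsub>BS q\<^esub> (q * k) \<otimes>\<^bsub>BS q\<^esub> bs_a q"
      by (simp add: BS.m_assoc)
    hence "bs_class q [c] \<otimes>\<^bsub>BS q\<^esub> bs_class q (nf_word m k m') = bs_class q (nf_word 0 (q * k) (Suc m'))"
      unfolding Ga 0
      by (simp add: bs_class_nf_word BS.nat_pow_Suc2 del: nat_pow_Suc BS.nat_pow_Suc flip: BS.m_assoc)
    thus ?thesis by blast
  next
    case (Suc m0)
    have "bs_class q [c] \<otimes>\<^bsub>BS q\<^esub> bs_class q (nf_word m k m') = bs_class q (nf_word m0 k m')"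
      unfolding Ga Suc by (simp add: bs_class_nf_word BS.inv_mult_group flip: BS.m_assoc)
    thus ?thesis by blast
  qed
next
  case Gai
  have "bs_class q [c] \<otimes>\<^bsub>BS q\<^esub> bs_class q (nf_word m k m') = bs_class q (nf_word (Suc m) k m')"
    using bs_class_gen_inv[of q Ga] unfolding Gai
    by (simp add: bs_class_nf_word BS.inv_mult_group flip: BS.m_assoc)
  thus ?thesis by blast
next
  case Gb
  thus ?thesis using bs_b_pow_mult_nf_word[of q 1 m k m'] by auto
next
  case Gbi
  thus ?thesis using bs_b_pow_mult_nf_word[of q "-1" m k m'] bs_class_gen_inv[of q Gb]
    by (auto simp: BS.int_pow_neg)
qed

lemma BS_normal_form: "g \<in> carrier (BS q) \<Longrightarrow> \<exists>m k m'. g = bs_class q (nf_word m k m')"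
proof -
  have "\<exists>m k m'. bs_class q w = bs_class q (nf_word m k m')" for w
  proof (induction w)
    case Nil
    have "bs_class q [] = bs_class q (nf_word 0 0 0)" by (simp add: nf_word_def bpow_def)
    thus ?case by blast
  next
    case (Cons c w)
    then obtain m k m' where w: "bs_class q w = bs_class q (nf_word m k m')" by blast
    have "bs_class q (c # w) = bs_class q [c] \<otimes>\<^bsub>BS q\<^esub> bs_class q (nf_word m k m')"
      unfolding w[symmetric] by (simp add: BS_mult)
    thus ?case using gen_mult_nf_word by metis
  qed
  thus "g \<in> carrier (BS q) \<Longrightarrow> ?thesis" by (auto simp: BS_carrier)
qed

lemma BS_eq_one_iff:
  assumes "q \<noteq> 0" "g \<in> carrier (BS q)"
  shows "g = \<one>\<^bsub>BS q\<^esub> \<longleftrightarrow> bs_exp g = 0 \<and> bs_transl q g = 0"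
proof
  assume triv: "bs_exp g = 0 \<and> bs_transl q g = 0"
  obtain m k m' where g: "g = bs_class q (nf_word m k m')" using BS_normal_form[OF assms(2)] by blast
  have "m' = m" "k = 0" using triv assms(1) by (simp_all add: g word_act_nf_word)
  thus "g = \<one>\<^bsub>BS q\<^esub>" by (simp add: g bs_class_nf_word)
qed (use assms in simp)

lemma BS_eq_iff:
  assumes "q \<noteq> 0" "g \<in> carrier (BS q)" "h \<in> carrier (BS q)"
  shows "g = h \<longleftrightarrow> bs_exp g = bs_exp h \<and> bs_transl q g = bs_transl q h"
proof
  assume "bs_exp g = bs_exp h \<and> bs_transl q g = bs_transl q h"
  hence "inv\<^bsub>BS q\<^esub> g \<otimes>\<^bsub>BS q\<^esub> h = \<one>\<^bsub>BS q\<^esub>"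
    using assms by (simp add: BS_eq_one_iff bs_exp_mult bs_exp_inv bs_transl_mult bs_transl_inv)
  thus "g = h" using assms(2,3) by (metis BS.inv_closed BS.inv_equality BS.inv_inv)
qed simp

lemma bs_b_zero: "bs_b 0 = \<one>\<^bsub>BS 0\<^esub>"
proof -
  have "bs_a 0 \<otimes>\<^bsub>BS 0\<^esub> bs_b 0 \<otimes>\<^bsub>BS 0\<^esub> inv\<^bsub>BS 0\<^esub> (bs_a 0) = \<one>\<^bsub>BS 0\<^esub>"
    using bs_relation[of 0] by simp
  hence "bs_a 0 \<otimes>\<^bsub>BS 0\<^esub> bs_b 0 = bs_a 0"
    by (metis BS.inv_closed BS.inv_equality BS.inv_inv BS.m_closed bs_class_in_carrier)
  thus ?thesis by simp
qed

lemma BS_zero_eq_iff: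
  assumes "g \<in> carrier (BS 0)" "h \<in> carrier (BS 0)"
  shows "g = h \<longleftrightarrow> bs_exp g = bs_exp h"
proof
  have trivial: "x = \<one>\<^bsub>BS 0\<^esub>" if x: "x \<in> carrier (BS 0)" "bs_exp x = 0" for x
  proof -
    obtain m k m' where nf: "x = bs_class 0 (nf_word m k m')" using BS_normal_form[OF x(1)] by blast
    have "m' = m" using x(2) by (simp add: nf)
    thus ?thesis by (simp add: nf bs_class_nf_word bs_b_zero)
  qed
  assume "bs_exp g = bs_exp h"
  hence "inv\<^bsub>BS 0\<^esub> g \<otimes>\<^bsub>BS 0\<^esub> h = \<one>\<^bsub>BS 0\<^esub>"
    using assms by (intro trivial) (simp_all add: bs_exp_mult bs_exp_inv)
  thus "g = h" using assms by (metis BS.inv_closed BS.inv_equality BS.inv_inv)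
qed simp

definition has_denom_pow :: "int \<Rightarrow> nat \<Rightarrow> real \<Rightarrow> bool" where
  "has_denom_pow q K r \<longleftrightarrow> (\<exists>z::int. of_int q ^ K * r = of_int z)"

lemma has_denom_pow_mono: "has_denom_pow q K r \<Longrightarrow> K \<le> K' \<Longrightarrow> has_denom_pow q K' r"
proof -
  assume "has_denom_pow q K r" "K \<le> K'"
  then obtain z where z: "of_int q ^ K * r = of_int z" by (auto simp: has_denom_pow_def)
  have "(of_int q :: real) ^ K' * r = of_int q ^ (K' - K) * (of_int q ^ K * r)"
    using \<open>K \<le> K'\<close> by (simp add: power_add[symmetric])
  also have "\<dots> = of_int (q ^ (K' - K) * z)" by (simp add: z)
  finally show ?thesis unfolding has_denom_pow_def by blast
qed

lemma has_denom_pow_add: "has_denom_pow q K r \<Longrightarrow> has_denom_pow q K r' \<Longrightarrow> has_denom_pow q K (r + r')"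
  unfolding has_denom_pow_def by (auto simp: distrib_left) (metis of_int_add)

lemma has_denom_pow_zero [simp]: "has_denom_pow q K 0"
  by (auto simp: has_denom_pow_def intro: exI[of _ 0])

lemma bs_transl_has_denom_pow:
  assumes "q \<noteq> 0" "g \<in> carrier (BS q)"
  shows "\<exists>K. has_denom_pow q K (bs_transl q g)"
proof -
  obtain m k m' where g: "g = bs_class q (nf_word m k m')" using BS_normal_form[OF assms(2)] by blast
  have "(of_int q :: real) ^ m * bs_transl q g = of_int k"
    using assms(1) by (simp add: g word_act_nf_word power_int_minus)
  thus ?thesis unfolding has_denom_pow_def by blast
qed

section \<open>Left orders and positive cones\<close>

definition cone_rel :: "('a, 'b) monoid_scheme \<Rightarrow> 'a set \<Rightarrow> 'a \<Rightarrow> 'a \<Rightarrow> bool" where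
  "cone_rel G P x y \<longleftrightarrow> x \<in> carrier G \<and> y \<in> carrier G \<and> inv\<^bsub>G\<^esub> x \<otimes>\<^bsub>G\<^esub> y \<in> P"

definition left_cone :: "('a, 'b) monoid_scheme \<Rightarrow> 'a set \<Rightarrow> bool" where
  "left_cone G P \<longleftrightarrow> P \<subseteq> carrier G \<and> \<one>\<^bsub>G\<^esub> \<notin> P \<and> (\<forall>g\<in>P. \<forall>h\<in>P. g \<otimes>\<^bsub>G\<^esub> h \<in> P) \<and>
     (\<forall>g\<in>carrier G. g \<noteq> \<one>\<^bsub>G\<^esub> \<longrightarrow> g \<in> P \<or> inv\<^bsub>G\<^esub> g \<in> P)"

lemma (in group) left_order_cone_rel:
  assumes "left_cone G P"
  shows "left_order G (cone_rel G P)" "positive_cone G (cone_rel G P) = P"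
proof -
  have sub: "P \<subseteq> carrier G" and one: "\<one> \<notin> P" and mult: "\<And>g h. g \<in> P \<Longrightarrow> h \<in> P \<Longrightarrow> g \<otimes> h \<in> P"
    and total: "\<And>g. g \<in> carrier G \<Longrightarrow> g \<noteq> \<one> \<Longrightarrow> g \<in> P \<or> inv g \<in> P"
    using assms unfolding left_cone_def by blast+
  have trans: "inv x \<otimes> z \<in> P" if "inv x \<otimes> y \<in> P" "inv y \<otimes> z \<in> P" "x \<in> carrier G" "y \<in> carrier G" "z \<in> carrier G"
    for x y z
    using mult[OF that(1,2)] that(3-5) by (simp add: m_assoc)
  have tot: "inv x \<otimes> y \<in> P \<or> inv y \<otimes> x \<in> P" if "x \<in> carrier G" "y \<in> carrier G" "x \<noteq> y" for x y
  proof -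
    have "inv x \<otimes> y \<noteq> \<one>" using that by (metis inv_closed inv_equality inv_inv)
    thus ?thesis using total[of "inv x \<otimes> y"] that by (simp add: inv_mult_group)
  qed
  have left: "inv (g \<otimes> x) \<otimes> (g \<otimes> y) = inv x \<otimes> y" if "g \<in> carrier G" "x \<in> carrier G" "y \<in> carrier G" for g x y
    using that by (simp add: inv_mult_group m_assoc)
  show "left_order G (cone_rel G P)"
    unfolding left_order_def cone_rel_def using one
    by (intro conjI allI ballI impI) (auto simp: left dest: tot intro: trans)
  show "positive_cone G (cone_rel G P) = P"
    using sub by (auto simp: positive_cone_def cone_rel_def)
qed

locale left_ordered_group = group G for G (structure) +
  fixes R :: "'a \<Rightarrow> 'a \<Rightarrow> bool"
  assumes R_carrier: "R x y \<Longrightarrow> x \<in> carrier G \<and> y \<in> carrier G"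
    and R_irrefl: "\<not> R x x"
    and R_trans: "R x y \<Longrightarrow> R y z \<Longrightarrow> R x z"
    and R_total: "x \<in> carrier G \<Longrightarrow> y \<in> carrier G \<Longrightarrow> x = y \<or> R x y \<or> R y x"
    and R_mult_left: "g \<in> carrier G \<Longrightarrow> R x y \<Longrightarrow> R (g \<otimes> x) (g \<otimes> y)"

lemma left_ordered_groupI:
  assumes "group G" "left_order G R"
  shows "left_ordered_group G R"
proof -
  have carrier: "\<forall>x y. R x y \<longrightarrow> x \<in> carrier G \<and> y \<in> carrier G"
    and irrefl: "\<forall>x\<in>carrier G. \<not> R x x"
    and trans: "\<forall>x\<in>carrier G. \<forall>y\<in>carrier G. \<forall>z\<in>carrier G. R x y \<longrightarrow> R y z \<longrightarrow> R x z"
    and total: "\<forall>x\<in>carrier G. \<forall>y\<in>carrier G. x = y \<or> R x y \<or> R y x"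
    and left: "\<forall>g\<in>carrier G. \<forall>x\<in>carrier G. \<forall>y\<in>carrier G. R x y \<longrightarrow> R (g \<otimes>\<^bsub>G\<^esub> x) (g \<otimes>\<^bsub>G\<^esub> y)"
    using assms(2) unfolding left_order_def by blast+
  show ?thesis
  proof (intro left_ordered_group.intro left_ordered_group_axioms.intro assms(1))
    show "R x y \<Longrightarrow> x \<in> carrier G \<and> y \<in> carrier G" for x y using carrier by blast
    show "\<not> R x x" for x using carrier irrefl by blast
    show "R x y \<Longrightarrow> R y z \<Longrightarrow> R x z" for x y z using carrier trans by blast
    show "x \<in> carrier G \<Longrightarrow> y \<in> carrier G \<Longrightarrow> x = y \<or> R x y \<or> R y x" for x y using total by blast
    show "g \<in> carrier G \<Longrightarrow> R x y \<Longrightarrow> R (g \<otimes>\<^bsub>G\<^esub> x) (g \<otimes>\<^bsub>G\<^esub> y)" for g x y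
      using carrier left by blast
  qed
qed

context left_ordered_group
begin

lemma R_asym: "R x y \<Longrightarrow> \<not> R y x"
  using R_trans R_irrefl by blast

lemma R_mult_left_iff:
  assumes "g \<in> carrier G" "x \<in> carrier G" "y \<in> carrier G"
  shows "R (g \<otimes> x) (g \<otimes> y) \<longleftrightarrow> R x y"
  using R_mult_left[of "inv g" "g \<otimes> x" "g \<otimes> y"] R_mult_left[of g x y] assms by auto

lemma R_iff_pos: "x \<in> carrier G \<Longrightarrow> y \<in> carrier G \<Longrightarrow> R x y \<longleftrightarrow> R \<one> (inv x \<otimes> y)"
  using R_mult_left_iff[of "inv x" x y] by simp

lemma neg_iff_inv_pos: "g \<in> carrier G \<Longrightarrow> R g \<one> \<longleftrightarrow> R \<one> (inv g)"
  using R_iff_pos[of g "\<one>"] by simp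

lemma pos_mult: "R \<one> g \<Longrightarrow> R \<one> h \<Longrightarrow> R \<one> (g \<otimes> h)"
  using R_mult_left[of g "\<one>" h] R_carrier R_trans by fastforce

lemma pos_inv_not_pos: "R \<one> g \<Longrightarrow> \<not> R \<one> (inv g)"
  using neg_iff_inv_pos R_asym R_carrier by blast

lemma pos_or_inv_pos: "g \<in> carrier G \<Longrightarrow> g \<noteq> \<one> \<Longrightarrow> R \<one> g \<or> R \<one> (inv g)"
  using R_total[of "\<one>" g] neg_iff_inv_pos by auto

lemma pos_pow: "R \<one> g \<Longrightarrow> n > 0 \<Longrightarrow> R \<one> (g [^] (n::nat))"
proof (induction n)
  case (Suc n)
  thus ?case using pos_mult R_carrier by (cases n) auto
qed simp

lemma pos_of_pos_pow:
  assumes "g \<in> carrier G" "n > 0" "R \<one> (g [^] (n::nat))"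
  shows "R \<one> g"
proof (rule ccontr)
  assume "\<not> R \<one> g"
  moreover have "g \<noteq> \<one>" using assms(3) R_irrefl by auto
  ultimately have "R \<one> (inv g [^] n)" using pos_or_inv_pos pos_pow assms(1,2) by blast
  thus False using assms pos_inv_not_pos by (simp add: nat_pow_inv)
qed

lemma converse: "left_ordered_group G (\<lambda>x y. R y x)"
  by unfold_locales (use R_carrier R_irrefl R_trans R_total R_mult_left in blast)+

end

section \<open>Left orders of BS(1,q)\<close>

locale bs_left_order = left_ordered_group "BS q" R for q :: int and R

lemma bs_left_orderI: "left_order (BS q) R \<Longrightarrow> bs_left_order q R"
  unfolding bs_left_order_def by (rule left_ordered_groupI[OF group_BS])

lemma (in bs_left_order) converse_bs_left_order: "bs_left_order q (\<lambda>x y. R y x)"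
  unfolding bs_left_order_def by (rule converse)

lemma translations_commensurable:
  assumes q: "q \<noteq> 0" and c: "c \<in> carrier (BS q)" "bs_exp c = 0" and d: "d \<in> carrier (BS q)" "bs_exp d = 0"
    and same_sign: "bs_transl q c * bs_transl q d > 0"
  shows "\<exists>(i::nat) (j::nat). i > 0 \<and> j > 0 \<and> c [^]\<^bsub>BS q\<^esub> i = d [^]\<^bsub>BS q\<^esub> j"
proof -
  obtain K1 K2 where "has_denom_pow q K1 (bs_transl q c)" "has_denom_pow q K2 (bs_transl q d)"
    using bs_transl_has_denom_pow[OF q c(1)] bs_transl_has_denom_pow[OF q d(1)] by blast
  hence "has_denom_pow q (K1 + K2) (bs_transl q c)" "has_denom_pow q (K1 + K2) (bs_transl q d)"
    by (simp_all add: has_denom_pow_mono)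
  then obtain \<alpha> \<beta> where \<alpha>: "of_int q ^ (K1 + K2) * bs_transl q c = of_int \<alpha>"
    and \<beta>: "of_int q ^ (K1 + K2) * bs_transl q d = of_int \<beta>"
    unfolding has_denom_pow_def by blast
  define Q :: real where "Q = of_int q ^ (K1 + K2)"
  have Q: "Q \<noteq> 0" using q by (simp add: Q_def)
  have "of_int (\<alpha> * \<beta>) = (Q * Q) * (bs_transl q c * bs_transl q d)"
    using \<alpha> \<beta> by (simp add: Q_def algebra_simps)
  moreover have "Q * Q > 0" using Q by (simp add: zero_less_mult_iff linorder_neq_iff disj_commute)
  ultimately have "(of_int (\<alpha> * \<beta>) :: real) > 0" using same_sign by simp
  hence \<alpha>\<beta>: "\<alpha> * \<beta> > 0" by (simp only: of_int_0_less_iff)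
  define i where "i = nat \<bar>\<beta>\<bar>"
  define j where "j = nat \<bar>\<alpha>\<bar>"
  have "bs_transl q (c [^]\<^bsub>BS q\<^esub> i) = of_int \<bar>\<beta>\<bar> * bs_transl q c"
    using bs_transl_pow[OF q c, of i] by (simp add: i_def)
  hence ci: "Q * bs_transl q (c [^]\<^bsub>BS q\<^esub> i) = of_int (\<bar>\<beta>\<bar> * \<alpha>)"
    using \<alpha> by (simp add: Q_def algebra_simps)
  have "bs_transl q (d [^]\<^bsub>BS q\<^esub> j) = of_int \<bar>\<alpha>\<bar> * bs_transl q d"
    using bs_transl_pow[OF q d, of j] by (simp add: j_def)
  hence dj: "Q * bs_transl q (d [^]\<^bsub>BS q\<^esub> j) = of_int (\<bar>\<alpha>\<bar> * \<beta>)"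
    using \<beta> by (simp add: Q_def algebra_simps)
  have "\<bar>\<beta>\<bar> * \<alpha> = \<bar>\<alpha>\<bar> * \<beta>" using \<alpha>\<beta> by (auto simp: zero_less_mult_iff)
  hence "bs_transl q (c [^]\<^bsub>BS q\<^esub> i) = bs_transl q (d [^]\<^bsub>BS q\<^esub> j)" using ci dj Q
    by (metis mult_cancel_left)
  hence "c [^]\<^bsub>BS q\<^esub> i = d [^]\<^bsub>BS q\<^esub> j"
    using q c d by (simp add: BS_eq_iff bs_exp_pow)
  moreover have "i > 0" "j > 0" using \<alpha>\<beta> by (auto simp: i_def j_def zero_less_mult_iff)
  ultimately show ?thesis by blast
qed

context bs_left_order
begin

lemma pos_if_transl_same_sign:
  assumes "q \<noteq> 0" "c \<in> carrier (BS q)" "bs_exp c = 0" "d \<in> carrier (BS q)" "bs_exp d = 0"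
    and "bs_transl q c * bs_transl q d > 0" and "R \<one>\<^bsub>BS q\<^esub> c"
  shows "R \<one>\<^bsub>BS q\<^esub> d"
proof -
  obtain i j :: nat where ij: "i > 0" "j > 0" "c [^]\<^bsub>BS q\<^esub> i = d [^]\<^bsub>BS q\<^esub> j"
    using translations_commensurable[OF assms(1-6)] by blast
  hence "R \<one>\<^bsub>BS q\<^esub> (d [^]\<^bsub>BS q\<^esub> j)" using pos_pow[OF assms(7) ij(1)] by simp
  thus ?thesis using pos_of_pos_pow assms(4) ij(2) by blast
qed

lemma kernel_pos_iff:
  assumes "q \<noteq> 0" "R \<one>\<^bsub>BS q\<^esub> (bs_b q)" "g \<in> carrier (BS q)" "bs_exp g = 0"
  shows "R \<one>\<^bsub>BS q\<^esub> g \<longleftrightarrow> bs_transl q g > 0"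
proof
  assume "bs_transl q g > 0"
  thus "R \<one>\<^bsub>BS q\<^esub> g" using pos_if_transl_same_sign[of "bs_b q" g] assms by simp
next
  assume pos: "R \<one>\<^bsub>BS q\<^esub> g"
  show "bs_transl q g > 0"
  proof (rule ccontr)
    assume "\<not> bs_transl q g > 0"
    moreover have "bs_transl q g \<noteq> 0" using pos assms R_irrefl BS_eq_one_iff by metis
    ultimately have "bs_transl q (inv\<^bsub>BS q\<^esub> g) > 0" using assms by (simp add: bs_transl_inv)
    hence "R \<one>\<^bsub>BS q\<^esub> (inv\<^bsub>BS q\<^esub> g)"
      using pos_if_transl_same_sign[of "bs_b q" "inv\<^bsub>BS q\<^esub> g"] assms by (simp add: bs_exp_inv)
    thus False using pos pos_inv_not_pos by blast
  qed
qed

end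

definition exp_halfspace :: "gen list set set \<Rightarrow> bool" where
  "exp_halfspace P \<longleftrightarrow> (\<forall>g\<in>P. bs_exp g \<ge> 0) \<or> (\<forall>g\<in>P. bs_exp g \<le> 0)"

lemma (in bs_left_order) exp_halfspace_if_exp_pos_sign:
  assumes "(\<forall>g\<in>carrier (BS q). bs_exp g > 0 \<longrightarrow> R \<one>\<^bsub>BS q\<^esub> g) \<or> (\<forall>g\<in>carrier (BS q). bs_exp g > 0 \<longrightarrow> R g \<one>\<^bsub>BS q\<^esub>)"
  shows "exp_halfspace (positive_cone (BS q) R)"
  using assms
proof
  assume exp_pos: "\<forall>g\<in>carrier (BS q). bs_exp g > 0 \<longrightarrow> R \<one>\<^bsub>BS q\<^esub> g"
  have "bs_exp g \<ge> 0" if "g \<in> positive_cone (BS q) R" for g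
    using that exp_pos[rule_format, of "inv\<^bsub>BS q\<^esub> g"] pos_inv_not_pos
    by (force simp: positive_cone_def bs_exp_inv)
  thus ?thesis by (simp add: exp_halfspace_def)
next
  assume exp_neg: "\<forall>g\<in>carrier (BS q). bs_exp g > 0 \<longrightarrow> R g \<one>\<^bsub>BS q\<^esub>"
  have "bs_exp g \<le> 0" if "g \<in> positive_cone (BS q) R" for g
    using that exp_neg R_asym by (force simp: positive_cone_def)
  thus ?thesis by (simp add: exp_halfspace_def)
qed

lemma powi_odd_neg: "q < 0 \<Longrightarrow> odd n \<Longrightarrow> (of_int q :: real) powi n < 0"
  by (auto simp: power_int_def power_less_zero_eq even_nat_iff)

context bs_left_order
begin

lemma kernel_below_pos_odd_exp:
  assumes q: "q < 0" and g: "g \<in> carrier (BS q)" "odd (bs_exp g)" "R \<one>\<^bsub>BS q\<^esub> g"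
    and c: "c \<in> carrier (BS q)" "bs_exp c = 0"
  shows "R c g"
proof (rule ccontr)
  assume "\<not> R c g"
  moreover have "c \<noteq> g" using g c by auto
  ultimately have "R g c" using R_total g(1) c(1) by blast
  hence c_pos: "R \<one>\<^bsub>BS q\<^esub> c" and gc_pos: "R \<one>\<^bsub>BS q\<^esub> (inv\<^bsub>BS q\<^esub> g \<otimes>\<^bsub>BS q\<^esub> c)"
    using g(3) R_trans R_iff_pos g(1) c(1) by blast+
  \<comment> \<open>Conjugating by g, whose exponent is odd, reverses the sign of the translation.\<close>
  define c' where "c' = inv\<^bsub>BS q\<^esub> g \<otimes>\<^bsub>BS q\<^esub> c \<otimes>\<^bsub>BS q\<^esub> g"
  have c': "c' \<in> carrier (BS q)" "bs_exp c' = 0" "bs_transl q c' = of_int q powi (- bs_exp g) * bs_transl q c"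
    using g c q by (simp_all add: c'_def bs_exp_mult bs_exp_inv bs_transl_mult bs_transl_inv)
  have "bs_transl q c \<noteq> 0" using c c_pos q R_irrefl BS_eq_one_iff by (metis less_irrefl)
  hence "bs_transl q c * bs_transl q c > 0" by (simp add: zero_less_mult_iff linorder_neq_iff disj_commute)
  moreover have "- (of_int q powi (- bs_exp g)) > (0::real)" using powi_odd_neg[OF q] g(2) by simp
  moreover have "bs_transl q c * bs_transl q (inv\<^bsub>BS q\<^esub> c')
      = - (of_int q powi (- bs_exp g)) * (bs_transl q c * bs_transl q c)"
    using c' q by (simp add: bs_transl_inv)
  ultimately have same_sign: "bs_transl q c * bs_transl q (inv\<^bsub>BS q\<^esub> c') > 0"
    by (simp only:) (rule mult_pos_pos)
  have "R \<one>\<^bsub>BS q\<^esub> (inv\<^bsub>BS q\<^esub> c')"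
    using pos_if_transl_same_sign[OF _ c _ _ same_sign c_pos] c' q by (simp add: bs_exp_inv)
  moreover have "inv\<^bsub>BS q\<^esub> (inv\<^bsub>BS q\<^esub> c') \<otimes>\<^bsub>BS q\<^esub> inv\<^bsub>BS q\<^esub> g = inv\<^bsub>BS q\<^esub> g \<otimes>\<^bsub>BS q\<^esub> c"
    using g(1) c(1) by (simp add: c'_def BS.m_assoc)
  hence "R (inv\<^bsub>BS q\<^esub> c') (inv\<^bsub>BS q\<^esub> g)"
    using gc_pos R_iff_pos[of "inv\<^bsub>BS q\<^esub> c'" "inv\<^bsub>BS q\<^esub> g"] c'(1) g(1) by simp
  ultimately show False using R_trans pos_inv_not_pos g(3) by blast
qed

lemma pos_if_exp_pos_of_neg:
  assumes q: "q < 0" and a: "R \<one>\<^bsub>BS q\<^esub> (bs_a q)" and g: "g \<in> carrier (BS q)" "bs_exp g > 0"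
  shows "R \<one>\<^bsub>BS q\<^esub> g"
proof -
  have odd_case: "R \<one>\<^bsub>BS q\<^esub> h" if h: "h \<in> carrier (BS q)" "bs_exp h > 0" "odd (bs_exp h)" for h
  proof -
    obtain n where n: "bs_exp h = int n" "n > 0" using h(2) by (metis pos_int_cases)
    define an where "an = bs_a q [^]\<^bsub>BS q\<^esub> n"
    have an: "an \<in> carrier (BS q)" "bs_exp an = bs_exp h" "R \<one>\<^bsub>BS q\<^esub> an"
      using n pos_pow[OF a] by (simp_all add: an_def bs_exp_pow)
    define c where "c = h \<otimes>\<^bsub>BS q\<^esub> inv\<^bsub>BS q\<^esub> an"
    have c: "c \<in> carrier (BS q)" "bs_exp (inv\<^bsub>BS q\<^esub> c) = 0"
      using h an by (simp_all add: c_def bs_exp_mult bs_exp_inv)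
    have "R (inv\<^bsub>BS q\<^esub> c) an" using kernel_below_pos_odd_exp[OF q an(1) _ an(3) _ c(2)] an(2) h(3) c(1) by simp
    hence "R (c \<otimes>\<^bsub>BS q\<^esub> inv\<^bsub>BS q\<^esub> c) (c \<otimes>\<^bsub>BS q\<^esub> an)" using R_mult_left c(1) by blast
    thus ?thesis using h an c(1) by (simp add: c_def BS.m_assoc)
  qed
  show ?thesis
  proof (cases "odd (bs_exp g)")
    case False
    have "R \<one>\<^bsub>BS q\<^esub> (g \<otimes>\<^bsub>BS q\<^esub> inv\<^bsub>BS q\<^esub> (bs_a q))"
      using g False by (intro odd_case) (simp_all add: bs_exp_mult bs_exp_inv, presburger)
    hence "R \<one>\<^bsub>BS q\<^esub> (g \<otimes>\<^bsub>BS q\<^esub> inv\<^bsub>BS q\<^esub> (bs_a q) \<otimes>\<^bsub>BS q\<^esub> bs_a q)" using a pos_mult by blast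
    thus ?thesis using g by (simp add: BS.m_assoc)
  qed (use g odd_case in blast)
qed

lemma exp_halfspace_of_neg:
  assumes "q < 0"
  shows "exp_halfspace (positive_cone (BS q) R)"
proof -
  have "bs_a q \<noteq> \<one>\<^bsub>BS q\<^esub>" by (metis bs_exp_class bs_exp_one word_exp_simps(1,2) gen_exp.simps(1) add.right_neutral zero_neq_one)
  hence "R \<one>\<^bsub>BS q\<^esub> (bs_a q) \<or> R (bs_a q) \<one>\<^bsub>BS q\<^esub>"
    by (metis R_total BS.one_closed bs_class_in_carrier)
  hence "(\<forall>g\<in>carrier (BS q). bs_exp g > 0 \<longrightarrow> R \<one>\<^bsub>BS q\<^esub> g) \<or> (\<forall>g\<in>carrier (BS q). bs_exp g > 0 \<longrightarrow> R g \<one>\<^bsub>BS q\<^esub>)"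
    using pos_if_exp_pos_of_neg[OF assms] bs_left_order.pos_if_exp_pos_of_neg[OF converse_bs_left_order assms]
    by blast
  thus ?thesis by (rule exp_halfspace_if_exp_pos_sign)
qed

end

lemma bs_act_less_iff: "q > 0 \<Longrightarrow> bs_act q g x < bs_act q g y \<longleftrightarrow> x < y"
  by (simp add: bs_act_affine)

lemma bs_act_inv_less_iff:
  assumes "q > 0" "g \<in> carrier (BS q)"
  shows "bs_act q (inv\<^bsub>BS q\<^esub> g) x < x \<longleftrightarrow> x < bs_act q g x"
    and "x < bs_act q (inv\<^bsub>BS q\<^esub> g) x \<longleftrightarrow> bs_act q g x < x"
  using bs_act_less_iff[OF assms(1), of g "bs_act q (inv\<^bsub>BS q\<^esub> g) x" x]
    bs_act_less_iff[OF assms(1), of g x "bs_act q (inv\<^bsub>BS q\<^esub> g) x"] assms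
  by (simp_all add: bs_act_inv)

definition bs_fixpoint :: "int \<Rightarrow> gen list set \<Rightarrow> real" where
  "bs_fixpoint q g = bs_transl q g / (1 - of_int q powi bs_exp g)"

lemma powi_gt_one: "q \<ge> 2 \<Longrightarrow> n > 0 \<Longrightarrow> (of_int q :: real) powi n > 1"
  using power_int_strict_increasing[of 0 n "of_int q :: real"] by simp

lemma bs_transl_fixpoint: "q \<ge> 2 \<Longrightarrow> bs_exp g > 0 \<Longrightarrow> bs_transl q g = (1 - of_int q powi bs_exp g) * bs_fixpoint q g"
  using powi_gt_one[of q "bs_exp g"] by (simp add: bs_fixpoint_def)

lemma bs_act_fixpoint:
  assumes "q \<ge> 2" "bs_exp g > 0"
  shows "bs_act q g x - x = (of_int q powi bs_exp g - 1) * (x - bs_fixpoint q g)"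
proof -
  have "bs_act q g x = of_int q powi bs_exp g * x + bs_transl q g"
    using assms(1) by (intro bs_act_affine) simp
  thus ?thesis unfolding bs_transl_fixpoint[OF assms] by (simp add: algebra_simps)
qed

lemma bs_act_gt_iff_fixpoint_less:
  assumes "q \<ge> 2" "bs_exp g > 0"
  shows "x < bs_act q g x \<longleftrightarrow> bs_fixpoint q g < x"
proof -
  have "x < bs_act q g x \<longleftrightarrow> 0 < bs_act q g x - x" by simp
  also have "\<dots> \<longleftrightarrow> 0 < x - bs_fixpoint q g"
    unfolding bs_act_fixpoint[OF assms] using powi_gt_one[OF assms] by (simp add: zero_less_mult_iff)
  finally show ?thesis by simp
qed

lemma bs_act_eq_iff_fixpoint:
  assumes "q \<ge> 2" "bs_exp g > 0"
  shows "bs_act q g x = x \<longleftrightarrow> x = bs_fixpoint q g"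
proof -
  have "bs_act q g x = x \<longleftrightarrow> bs_act q g x - x = 0" by simp
  also have "\<dots> \<longleftrightarrow> x = bs_fixpoint q g"
    unfolding bs_act_fixpoint[OF assms] using powi_gt_one[OF assms] by simp
  finally show ?thesis .
qed

lemma bs_fixpoint_pow:
  assumes "q \<ge> 2" "g \<in> carrier (BS q)" "bs_exp g > 0" "n > 0"
  shows "bs_fixpoint q (g [^]\<^bsub>BS q\<^esub> (n::nat)) = bs_fixpoint q g"
proof -
  have "bs_act q g (bs_fixpoint q g) = bs_fixpoint q g" using assms bs_act_eq_iff_fixpoint by blast
  hence "bs_act q (g [^]\<^bsub>BS q\<^esub> n) (bs_fixpoint q g) = bs_fixpoint q g"
    using bs_act_pow_fixed assms by simp
  thus ?thesis using assms bs_act_eq_iff_fixpoint[of q "g [^]\<^bsub>BS q\<^esub> n"] by (simp add: bs_exp_pow)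
qed

lemma bs_transl_quotient_fixpoints:
  assumes "q \<ge> 2" "g \<in> carrier (BS q)" "h \<in> carrier (BS q)" "bs_exp h = bs_exp g" "bs_exp g > 0"
  shows "bs_exp (h \<otimes>\<^bsub>BS q\<^esub> inv\<^bsub>BS q\<^esub> g) = 0"
    and "bs_transl q (h \<otimes>\<^bsub>BS q\<^esub> inv\<^bsub>BS q\<^esub> g)
           = (bs_fixpoint q g - bs_fixpoint q h) * (of_int q powi bs_exp g - 1)"
proof -
  have "of_int q powi bs_exp g * of_int q powi (- bs_exp g) = (1::real)"
    using assms(1) by (simp add: power_int_minus)
  thus "bs_transl q (h \<otimes>\<^bsub>BS q\<^esub> inv\<^bsub>BS q\<^esub> g)
           = (bs_fixpoint q g - bs_fixpoint q h) * (of_int q powi bs_exp g - 1)"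
    using assms bs_transl_fixpoint[of q g] bs_transl_fixpoint[of q h]
    by (simp add: bs_transl_mult bs_transl_inv algebra_simps)
qed (use assms in \<open>simp add: bs_exp_mult bs_exp_inv\<close>)

context bs_left_order
begin

lemma pos_if_fixpoint_le:
  assumes q: "q \<ge> 2" and b: "R \<one>\<^bsub>BS q\<^esub> (bs_b q)"
    and g: "g \<in> carrier (BS q)" "bs_exp g > 0" "R \<one>\<^bsub>BS q\<^esub> g"
    and h: "h \<in> carrier (BS q)" "bs_exp h > 0" and le: "bs_fixpoint q h \<le> bs_fixpoint q g"
  shows "R \<one>\<^bsub>BS q\<^esub> h"
proof -
  \<comment> \<open>Pass to powers of g and h with a common exponent.\<close>
  obtain m n where mn: "bs_exp g = int m" "bs_exp h = int n" "m > 0" "n > 0"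
    using g(2) h(2) by (metis pos_int_cases)
  define g' where "g' = g [^]\<^bsub>BS q\<^esub> n"
  define h' where "h' = h [^]\<^bsub>BS q\<^esub> m"
  have g': "g' \<in> carrier (BS q)" "bs_exp g' > 0" "R \<one>\<^bsub>BS q\<^esub> g'" "bs_fixpoint q g' = bs_fixpoint q g"
    using g mn pos_pow bs_fixpoint_pow[OF q g(1,2)] by (simp_all add: g'_def bs_exp_pow)
  have h': "h' \<in> carrier (BS q)" "bs_exp h' = bs_exp g'" "bs_fixpoint q h' = bs_fixpoint q h"
    using g(1) h mn bs_fixpoint_pow[OF q h(1,2)] by (simp_all add: h'_def g'_def bs_exp_pow)
  define c where "c = h' \<otimes>\<^bsub>BS q\<^esub> inv\<^bsub>BS q\<^esub> g'"
  have c: "c \<in> carrier (BS q)" "bs_exp c = 0" "bs_transl q c \<ge> 0"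
    using bs_transl_quotient_fixpoints[OF q g'(1) h'(1,2) g'(2)] g' h' le powi_gt_one[OF q g'(2)]
    by (simp_all add: c_def)
  have "R \<one>\<^bsub>BS q\<^esub> c \<or> c = \<one>\<^bsub>BS q\<^esub>"
    using c kernel_pos_iff[OF _ b c(1,2)] BS_eq_one_iff[of q c] q by force
  hence "R \<one>\<^bsub>BS q\<^esub> (c \<otimes>\<^bsub>BS q\<^esub> g')" using pos_mult g'(1,3) by (metis BS.l_one)
  moreover have "c \<otimes>\<^bsub>BS q\<^esub> g' = h'" using g'(1) h'(1) by (simp add: c_def BS.m_assoc)
  ultimately have "R \<one>\<^bsub>BS q\<^esub> h'" by simp
  thus ?thesis unfolding h'_def by (rule pos_of_pos_pow[OF h(1) mn(3)])
qed

lemma induced_if_induced_on_exp_pos: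
  assumes q: "q > 0" and b: "R \<one>\<^bsub>BS q\<^esub> (bs_b q)"
    and exp_pos: "\<And>g. g \<in> carrier (BS q) \<Longrightarrow> bs_exp g > 0 \<Longrightarrow> bs_act q g x \<noteq> x \<Longrightarrow>
         R \<one>\<^bsub>BS q\<^esub> g \<longleftrightarrow> x < bs_act q g x"
    and g: "g \<in> carrier (BS q)" "bs_act q g x \<noteq> x"
  shows "R \<one>\<^bsub>BS q\<^esub> g \<longleftrightarrow> x < bs_act q g x"
proof -
  consider "bs_exp g = 0" | "bs_exp g > 0" | "bs_exp g < 0" by linarith
  thus ?thesis
  proof cases
    case 1
    thus ?thesis using kernel_pos_iff[OF _ b g(1)] q by (simp add: bs_act_affine)
  next
    case 2
    thus ?thesis using exp_pos g by blast
  next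
    case 3
    let ?h = "inv\<^bsub>BS q\<^esub> g"
    have "bs_act q ?h x \<noteq> x" using g q bs_act_inv(2)[of q g x] by force
    hence "R \<one>\<^bsub>BS q\<^esub> ?h \<longleftrightarrow> x < bs_act q ?h x"
      using exp_pos[of ?h] g 3 by (simp add: bs_exp_inv)
    moreover have "g \<noteq> \<one>\<^bsub>BS q\<^esub>" using 3 by auto
    hence "R \<one>\<^bsub>BS q\<^esub> g \<longleftrightarrow> \<not> R \<one>\<^bsub>BS q\<^esub> ?h" using pos_or_inv_pos pos_inv_not_pos g(1) by blast
    ultimately show ?thesis
      using bs_act_inv_less_iff[OF q g(1), of x] \<open>bs_act q ?h x \<noteq> x\<close> by auto
  qed
qed

lemma classify_of_b_pos:
  assumes q: "q \<ge> 2" and b: "R \<one>\<^bsub>BS q\<^esub> (bs_b q)"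
  shows "(\<forall>g\<in>carrier (BS q). bs_exp g > 0 \<longrightarrow> R g \<one>\<^bsub>BS q\<^esub>) \<or>
         (\<forall>g\<in>carrier (BS q). bs_exp g > 0 \<longrightarrow> R \<one>\<^bsub>BS q\<^esub> g) \<or>
         (\<exists>x. \<forall>g\<in>carrier (BS q). bs_act q g x \<noteq> x \<longrightarrow> (R \<one>\<^bsub>BS q\<^esub> g \<longleftrightarrow> x < bs_act q g x))"
proof -
  \<comment> \<open>If S is nonempty and bounded, the order is induced at its supremum.\<close>
  define S where "S = bs_fixpoint q ` {g \<in> carrier (BS q). bs_exp g > 0 \<and> R \<one>\<^bsub>BS q\<^esub> g}"
  have S_pos: "R \<one>\<^bsub>BS q\<^esub> h" if "s \<in> S" "bs_fixpoint q h \<le> s" "h \<in> carrier (BS q)" "bs_exp h > 0" for s h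
    using that pos_if_fixpoint_le[OF q b] by (auto simp: S_def)
  consider "S = {}" | "\<not> bdd_above S" | "S \<noteq> {}" "bdd_above S" by blast
  thus ?thesis
  proof cases
    case 1
    have "R g \<one>\<^bsub>BS q\<^esub>" if "g \<in> carrier (BS q)" "bs_exp g > 0" for g
      using that 1 R_total[of g "\<one>\<^bsub>BS q\<^esub>"] by (force simp: S_def)
    thus ?thesis by blast
  next
    case 2
    have "R \<one>\<^bsub>BS q\<^esub> h" if "h \<in> carrier (BS q)" "bs_exp h > 0" for h
      using 2 S_pos[OF _ _ that] unfolding bdd_above_def by (meson linorder_le_cases)
    thus ?thesis by blast
  next
    case 3
    define x where "x = Sup S"
    have "R \<one>\<^bsub>BS q\<^esub> g \<longleftrightarrow> x < bs_act q g x"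
      if g: "g \<in> carrier (BS q)" "bs_exp g > 0" "bs_act q g x \<noteq> x" for g
    proof
      assume "R \<one>\<^bsub>BS q\<^esub> g"
      hence "bs_fixpoint q g \<le> x" unfolding x_def using g 3(2) by (auto simp: S_def intro: cSup_upper)
      moreover have "x \<noteq> bs_fixpoint q g" using g bs_act_eq_iff_fixpoint[OF q g(2)] by blast
      ultimately show "x < bs_act q g x" using bs_act_gt_iff_fixpoint_less[OF q g(2)] by simp
    next
      assume "x < bs_act q g x"
      hence "bs_fixpoint q g < Sup S" using bs_act_gt_iff_fixpoint_less[OF q g(2)] by (simp add: x_def)
      then obtain s where "s \<in> S" "bs_fixpoint q g < s" using less_cSup_iff[OF 3] by blast
      thus "R \<one>\<^bsub>BS q\<^esub> g" using S_pos g by fastforce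
    qed
    hence "\<forall>g\<in>carrier (BS q). bs_act q g x \<noteq> x \<longrightarrow> (R \<one>\<^bsub>BS q\<^esub> g \<longleftrightarrow> x < bs_act q g x)"
      using induced_if_induced_on_exp_pos[of x] q b by auto
    thus ?thesis by blast
  qed
qed

lemma exp_halfspace_or_induced:
  assumes q: "q \<ge> 2"
  shows "exp_halfspace (positive_cone (BS q) R) \<or> induced_by_affine_action q R"
proof -
  have "bs_b q \<noteq> \<one>\<^bsub>BS q\<^esub>" using q BS_eq_one_iff[of q "bs_b q"] by simp
  hence "R \<one>\<^bsub>BS q\<^esub> (bs_b q) \<or> R (bs_b q) \<one>\<^bsub>BS q\<^esub>"
    by (metis R_total BS.one_closed bs_class_in_carrier)
  thus ?thesis
  proof
    assume "R \<one>\<^bsub>BS q\<^esub> (bs_b q)"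
    from classify_of_b_pos[OF q this] show ?thesis
      using exp_halfspace_if_exp_pos_sign unfolding induced_by_affine_action_def by blast
  next
    assume "R (bs_b q) \<one>\<^bsub>BS q\<^esub>"
    from bs_left_order.classify_of_b_pos[OF converse_bs_left_order q this]
    consider "(\<forall>g\<in>carrier (BS q). bs_exp g > 0 \<longrightarrow> R \<one>\<^bsub>BS q\<^esub> g) \<or>
        (\<forall>g\<in>carrier (BS q). bs_exp g > 0 \<longrightarrow> R g \<one>\<^bsub>BS q\<^esub>)"
      | x where "\<forall>g\<in>carrier (BS q). bs_act q g x \<noteq> x \<longrightarrow> (R g \<one>\<^bsub>BS q\<^esub> \<longleftrightarrow> x < bs_act q g x)"
      by blast
    thus ?thesis
    proof cases
      case 1
      thus ?thesis using exp_halfspace_if_exp_pos_sign by blast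
    next
      case (2 x)
      \<comment> \<open>The converse order is induced at x; pass to inverses.\<close>
      have "R \<one>\<^bsub>BS q\<^esub> g \<longleftrightarrow> bs_act q g x < x" if g: "g \<in> carrier (BS q)" "bs_act q g x \<noteq> x" for g
      proof -
        have "bs_act q (inv\<^bsub>BS q\<^esub> g) x \<noteq> x" using g q bs_act_inv(2)[of q g x] by force
        hence "R (inv\<^bsub>BS q\<^esub> g) \<one>\<^bsub>BS q\<^esub> \<longleftrightarrow> x < bs_act q (inv\<^bsub>BS q\<^esub> g) x" using 2 g(1) by simp
        thus ?thesis using neg_iff_inv_pos[of "inv\<^bsub>BS q\<^esub> g"] bs_act_inv_less_iff(2)[of q g x] q g(1) by simp
      qed
      thus ?thesis unfolding induced_by_affine_action_def by blast
    qed
  qed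
qed

end

section \<open>Pumping in regular positive cones\<close>

lemma nfa_run_append: "nfa_run D p u s \<Longrightarrow> nfa_run D s v r \<Longrightarrow> nfa_run D p (u @ v) r"
  by (induction rule: nfa_run.induct) (auto intro: nfa_run.intros)

lemma nfa_run_states:
  "nfa_run D p w r \<Longrightarrow> \<exists>ss. length ss = Suc (length w) \<and> ss ! 0 = p \<and> ss ! length w = r \<and>
     (\<forall>i<length w. (ss ! i, w ! i, ss ! Suc i) \<in> D)"
proof (induction rule: nfa_run.induct)
  case (nfa_nil p)
  thus ?case by (intro exI[of _ "[p]"]) simp
next
  case (nfa_step p x p' w r)
  then obtain ss where ss: "length ss = Suc (length w)" "ss ! 0 = p'" "ss ! length w = r"
    "\<forall>i<length w. (ss ! i, w ! i, ss ! Suc i) \<in> D" by blast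
  have "\<forall>i<length (x # w). ((p # ss) ! i, (x # w) ! i, (p # ss) ! Suc i) \<in> D"
    using ss nfa_step.hyps(1) by (auto simp: less_Suc_eq_0_disj)
  thus ?case using ss by (intro exI[of _ "p # ss"]) simp
qed

lemma nfa_run_segment:
  assumes "\<forall>i<length w. (ss ! i, w ! i, ss ! Suc i) \<in> D" "i \<le> j" "j \<le> length w"
  shows "nfa_run D (ss ! i) (drop i (take j w)) (ss ! j)"
  using assms(2,3)
proof (induction j)
  case (Suc j)
  show ?case
  proof (cases "i = Suc j")
    case False
    hence "i \<le> j" "j < length w" using Suc.prems by auto
    moreover have "drop i (take (Suc j) w) = drop i (take j w) @ [w ! j]"
      using \<open>i \<le> j\<close> \<open>j < length w\<close> by (simp add: take_Suc_conv_app_nth)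
    ultimately show ?thesis
      using Suc.IH assms(1) by (auto intro: nfa_run_append nfa_run.intros)
  qed (simp add: nfa_run.nfa_nil)
qed (simp add: nfa_run.nfa_nil)

lemma first_level_times:
  fixes h :: "nat \<Rightarrow> int"
  assumes h0: "h 0 = 0" and step: "\<And>i. i < n \<Longrightarrow> \<bar>h (Suc i) - h i\<bar> < int s" and "s > 0"
    and deep: "i0 \<le> n" "h i0 \<le> - (int k * int s)"
  obtains t where "\<And>j. j \<le> k \<Longrightarrow> t j \<le> n \<and> h (t j) \<le> - (int j * int s) \<and> - ((int j + 1) * int s) < h (t j)"
    and "\<And>a b. a \<le> b \<Longrightarrow> b \<le> k \<Longrightarrow> t a \<le> t b"
proof -
  define reach where "reach j i \<longleftrightarrow> i \<le> n \<and> h i \<le> - (int j * int s)" for j i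
  define t where "t j = (LEAST i. reach j i)" for j
  have t_reach: "reach j (t j)" if "j \<le> k" for j
  proof -
    have "int j * int s \<le> int k * int s" using that by (simp add: mult_right_mono)
    hence "reach j i0" using deep by (simp add: reach_def)
    thus ?thesis unfolding t_def by (rule LeastI)
  qed
  have t_low: "h (t j) > - ((int j + 1) * int s)" if "j \<le> k" for j
  proof (cases "t j")
    case 0
    thus ?thesis using h0 \<open>s > 0\<close> by (simp add: add_pos_nonneg)
  next
    case (Suc i)
    hence "\<not> reach j i" unfolding t_def by (metis lessI not_less_Least)
    moreover have "i < n" using t_reach[OF that] Suc by (simp add: reach_def)
    ultimately show ?thesis using step[of i] Suc by (simp add: reach_def algebra_simps)
  qed
  have mono: "t a \<le> t b" if "a \<le> b" "b \<le> k" for a b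
  proof -
    have "int a * int s \<le> int b * int s" using that(1) by (simp add: mult_right_mono)
    hence "reach a (t b)" using t_reach[OF that(2)] unfolding reach_def by linarith
    thus ?thesis unfolding t_def by (rule Least_le)
  qed
  have "t j \<le> n \<and> h (t j) \<le> - (int j * int s) \<and> - ((int j + 1) * int s) < h (t j)" if "j \<le> k" for j
    using t_reach[OF that] t_low[OF that] by (simp add: reach_def)
  thus ?thesis using mono by (rule that)
qed

text \<open>Consider the first times the height reaches the levels 0, -s, ..., -(card Q * s); two of
  them are at the same state, and the later one is at a strictly lower height.\<close>

lemma descending_state_repetition:
  fixes h :: "nat \<Rightarrow> int" and st :: "nat \<Rightarrow> 'q"
  assumes fin: "finite Q" and st: "\<And>i. i \<le> n \<Longrightarrow> st i \<in> Q"
    and h0: "h 0 = 0" and step: "\<And>i. i < n \<Longrightarrow> \<bar>h (Suc i) - h i\<bar> < int s"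
    and deep: "i0 \<le> n" "h i0 < - int (card Q * s)"
  shows "\<exists>i1 i2. i1 < i2 \<and> i2 \<le> n \<and> st i1 = st i2 \<and> h i2 < h i1"
proof -
  have "i0 \<noteq> 0"
  proof
    assume "i0 = 0"
    hence "h i0 = 0" using h0 by simp
    moreover have "0 \<le> int (card Q * s)" by simp
    ultimately show False using deep(2) by linarith
  qed
  hence "0 < n" using deep(1) by simp
  from step[OF this] have "s > 0" by linarith
  moreover have "h i0 \<le> - (int (card Q) * int s)" using deep(2) by simp
  ultimately obtain t where t: "\<And>j. j \<le> card Q \<Longrightarrow>
      t j \<le> n \<and> h (t j) \<le> - (int j * int s) \<and> - ((int j + 1) * int s) < h (t j)"
    and t_mono: "\<And>a b. a \<le> b \<Longrightarrow> b \<le> card Q \<Longrightarrow> t a \<le> t b"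
    using first_level_times[OF h0 step _ deep(1)] by blast
  have "\<not> inj_on (\<lambda>j. st (t j)) {0..card Q}"
  proof
    assume "inj_on (\<lambda>j. st (t j)) {0..card Q}"
    moreover have "(\<lambda>j. st (t j)) ` {0..card Q} \<subseteq> Q" using t st by auto
    ultimately have "card {0..card Q} \<le> card Q" using card_inj_on_le fin by blast
    thus False by simp
  qed
  then obtain a b where ab: "a < b" "b \<le> card Q" "st (t a) = st (t b)"
    unfolding inj_on_def by (metis atLeastAtMost_iff linorder_neqE_nat)
  have "(int a + 1) * int s \<le> int b * int s" using ab(1) by (simp add: mult_right_mono)
  hence "h (t b) < h (t a)" using t[of a] t[of b] ab by linarith
  moreover have "t a \<le> t b" using t_mono ab by simp
  ultimately show ?thesis using ab(3) t[OF ab(2)] by (metis le_neq_implies_less less_irrefl)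
qed

lemma nfa_run_pump_descending:
  assumes run: "nfa_run D p w r" and D: "D \<subseteq> Q \<times> X \<times> Q" and fin: "finite Q" and r: "r \<in> Q"
    and step: "\<And>x. x \<in> set w \<Longrightarrow> \<bar>wt x\<bar> < int s"
    and deep: "i0 \<le> length w" "sum_list (map wt (take i0 w)) < - int (card Q * s)"
  shows "\<exists>u v z. w = u @ v @ z \<and> sum_list (map wt v) < 0 \<and>
           nfa_run D p (u @ z) r \<and> nfa_run D p (u @ v @ v @ z) r"
proof -
  obtain ss where ss: "length ss = Suc (length w)" "ss ! 0 = p" "ss ! length w = r"
    "\<forall>i<length w. (ss ! i, w ! i, ss ! Suc i) \<in> D"
    using nfa_run_states[OF run] by blast
  have ssQ: "ss ! i \<in> Q" if "i \<le> length w" for i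
    using that ss(3,4) D r by (cases "i < length w") auto
  define h where "h i = sum_list (map wt (take i w))" for i
  have "\<bar>h (Suc i) - h i\<bar> < int s" if "i < length w" for i
    using that step[of "w ! i"] by (simp add: h_def take_Suc_conv_app_nth)
  then obtain i1 i2 where i12: "i1 < i2" "i2 \<le> length w" "ss ! i1 = ss ! i2" "h i2 < h i1"
    using descending_state_repetition[of Q "length w" "\<lambda>i. ss ! i" h s i0] fin ssQ deep
    by (auto simp: h_def)
  define u where "u = take i1 w"
  define v where "v = drop i1 (take i2 w)"
  define z where "z = drop i2 w"
  have uv: "take i2 w = u @ v"
    using i12(1) unfolding u_def v_def by (metis append_take_drop_id less_imp_le min.absorb1 take_take)
  hence w: "w = u @ v @ z" by (metis append.assoc append_take_drop_id z_def)
  have "nfa_run D p u (ss ! i1)" "nfa_run D (ss ! i1) v (ss ! i1)" "nfa_run D (ss ! i1) z r"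
    using nfa_run_segment[OF ss(4), of 0 i1] nfa_run_segment[OF ss(4), of i1 i2]
      nfa_run_segment[OF ss(4), of i2 "length w"] i12 ss(2,3)
    by (simp_all add: u_def v_def z_def)
  moreover have "sum_list (map wt v) < 0" using i12(4) uv by (simp add: h_def u_def)
  ultimately show ?thesis using w by (blast intro: nfa_run_append)
qed

lemma has_denom_pow_uminus [simp]: "has_denom_pow q K (- r) \<longleftrightarrow> has_denom_pow q K r"
  unfolding has_denom_pow_def by (metis minus_minus mult_minus_right of_int_minus)

lemma has_denom_pow_mult_powi:
  assumes "q \<noteq> 0" "has_denom_pow q K r" "int K = int K' + n"
  shows "has_denom_pow q K' (of_int q powi n * r)"
proof -
  have "(of_int q :: real) ^ K' * (of_int q powi n * r) = of_int q powi (int K' + n) * r"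
    using assms(1) by (simp add: power_int_add mult.assoc)
  also have "\<dots> = of_int q ^ K * r" by (simp flip: assms(3))
  finally show ?thesis using assms(2) unfolding has_denom_pow_def by metis
qed

lemma not_has_denom_pow_powi:
  assumes "\<bar>q\<bar> \<ge> 2"
  shows "\<not> has_denom_pow q K (of_int q powi (- int (Suc K)))"
proof
  assume "has_denom_pow q K (of_int q powi (- int (Suc K)))"
  then obtain z where "(of_int q :: real) ^ K * of_int q powi (- int (Suc K)) = of_int z"
    by (auto simp: has_denom_pow_def)
  moreover have "(of_int q :: real) ^ K * of_int q powi (- int (Suc K)) * of_int q = 1"
  proof -
    have "q \<noteq> 0" using assms by auto
    thus ?thesis by (simp only: power_int_minus power_int_of_nat) (simp add: field_simps)
  qed
  ultimately have "z * q = 1" by (metis of_int_eq_1_iff of_int_mult)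
  hence zq: "\<bar>z\<bar> * \<bar>q\<bar> = 1" by (metis abs_mult abs_one)
  show False
  proof (cases "z = 0")
    case False
    hence "1 * 2 \<le> \<bar>z\<bar> * \<bar>q\<bar>" using assms by (intro mult_mono) auto
    thus False using zq by simp
  qed (use zq in simp)
qed

locale bs_word_hom =
  fixes q :: int and X :: "nat set" and \<pi> :: "nat list \<Rightarrow> gen list set"
  assumes q_nonzero: "q \<noteq> 0" and finite_X: "finite X"
    and pi_Nil: "\<pi> [] = \<one>\<^bsub>BS q\<^esub>"
    and pi_append: "u \<in> lists X \<Longrightarrow> v \<in> lists X \<Longrightarrow> \<pi> (u @ v) = \<pi> u \<otimes>\<^bsub>BS q\<^esub> \<pi> v"
    and pi_carrier: "w \<in> lists X \<Longrightarrow> \<pi> w \<in> carrier (BS q)"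
begin

lemma pi_Cons:
  assumes "x \<in> X" "w \<in> lists X"
  shows "\<pi> (x # w) = \<pi> [x] \<otimes>\<^bsub>BS q\<^esub> \<pi> w"
proof -
  have "[x] \<in> lists X" using assms(1) by simp
  from pi_append[OF this assms(2)] show ?thesis by simp
qed

lemma bs_exp_pi: "w \<in> lists X \<Longrightarrow> bs_exp (\<pi> w) = sum_list (map (\<lambda>x. bs_exp (\<pi> [x])) w)"
proof (induction w)
  case (Cons x w)
  thus ?case by (simp add: pi_Cons[of x w] bs_exp_mult pi_carrier)
qed (simp add: pi_Nil)

lemma letter_exp_bound: "\<exists>s. \<forall>x\<in>X. \<bar>bs_exp (\<pi> [x])\<bar> < int s"
proof -
  have "\<bar>bs_exp (\<pi> [x])\<bar> < int ((\<Sum>y\<in>X. nat \<bar>bs_exp (\<pi> [y])\<bar>) + 1)" if "x \<in> X" for x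
    using member_le_sum[of x X "\<lambda>y. nat \<bar>bs_exp (\<pi> [y])\<bar>"] that finite_X by linarith
  thus ?thesis by blast
qed

lemma letter_denom_bound: "\<exists>e. \<forall>x\<in>X. has_denom_pow q e (bs_transl q (\<pi> [x]))"
proof -
  have "\<forall>x\<in>X. \<exists>K. has_denom_pow q K (bs_transl q (\<pi> [x]))"
    using bs_transl_has_denom_pow[OF q_nonzero pi_carrier] by simp
  then obtain ex where ex: "\<And>x. x \<in> X \<Longrightarrow> has_denom_pow q (ex x) (bs_transl q (\<pi> [x]))"
    by (metis bchoice)
  have "has_denom_pow q (\<Sum>y\<in>X. ex y) (bs_transl q (\<pi> [x]))" if "x \<in> X" for x
    using ex[OF that] has_denom_pow_mono member_le_sum[of x X ex] that finite_X by blast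
  thus ?thesis by blast
qed

text \<open>Reading a letter x scales the translation of the rest of the word by q to the exponent
  of x, so the exponents of the prefixes bound the denominator.\<close>

lemma has_denom_pow_if_prefixes_bounded:
  assumes letters: "\<And>x. x \<in> X \<Longrightarrow> has_denom_pow q e (bs_transl q (\<pi> [x]))"
  shows "w \<in> lists X \<Longrightarrow> (\<And>i. i \<le> length w \<Longrightarrow> bs_exp (\<pi> (take i w)) \<ge> - int K) \<Longrightarrow>
    has_denom_pow q (e + K) (bs_transl q (\<pi> w))"
proof (induction w arbitrary: K)
  case Nil
  thus ?case using q_nonzero by (simp add: pi_Nil)
next
  case (Cons x w)
  have x: "x \<in> X" and w: "w \<in> lists X" using Cons.prems(1) by auto
  have take_w: "take i w \<in> lists X" for i
    using w by (meson in_listsD in_listsI in_set_takeD)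
  have prefix: "bs_exp (\<pi> (take i (x # w))) = bs_exp (\<pi> [x]) + bs_exp (\<pi> (take i' w))" if "i = Suc i'" for i i'
    using pi_Cons[OF x take_w[of i']] x take_w[of i'] that by (simp add: bs_exp_mult pi_carrier)
  define K' where "K' = nat (int K + bs_exp (\<pi> [x]))"
  have K': "int K' = int K + bs_exp (\<pi> [x])"
    using Cons.prems(2)[of 1] prefix[of 1 0] by (simp add: K'_def pi_Nil)
  have rest: "has_denom_pow q (e + K') (bs_transl q (\<pi> w))"
    using Cons.prems(2) prefix K' by (intro Cons.IH w) force
  have "has_denom_pow q (e + K) (of_int q powi bs_exp (\<pi> [x]) * bs_transl q (\<pi> w))"
    using has_denom_pow_mult_powi[OF q_nonzero rest, of "e + K" "bs_exp (\<pi> [x])"] K' by simp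
  moreover have "has_denom_pow q (e + K) (bs_transl q (\<pi> [x]))"
    using letters[OF x] has_denom_pow_mono by simp
  ultimately show ?case
    using q_nonzero x w by (simp add: pi_Cons[OF x w] bs_transl_mult pi_carrier has_denom_pow_add)
qed

end

lemma (in bs_left_order) pos_kernel_elem_without_denom:
  assumes q: "\<bar>q\<bar> \<ge> 2"
  shows "\<exists>t\<in>positive_cone (BS q) R. bs_exp t = 0 \<and> \<not> has_denom_pow q K (bs_transl q t)"
proof -
  have q0: "q \<noteq> 0" using q by auto
  define c where "c = bs_class q (nf_word (Suc K) 1 (Suc K))"
  have c: "c \<in> carrier (BS q)" "bs_exp c = 0" "bs_transl q c = of_int q powi (- int (Suc K))"
    using q0 by (simp_all add: c_def word_act_nf_word)
  hence "c \<noteq> \<one>\<^bsub>BS q\<^esub>" using q0 by auto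
  hence "R \<one>\<^bsub>BS q\<^esub> c \<or> R \<one>\<^bsub>BS q\<^esub> (inv\<^bsub>BS q\<^esub> c)" using pos_or_inv_pos c(1) by blast
  moreover have "bs_exp (inv\<^bsub>BS q\<^esub> c) = 0" "bs_transl q (inv\<^bsub>BS q\<^esub> c) = - bs_transl q c"
    using c q0 by (simp_all add: bs_exp_inv bs_transl_inv)
  ultimately show ?thesis
    using c not_has_denom_pow_powi[OF q, of K] by (auto simp: positive_cone_def)
qed

lemma regular_cone_not_in_exp_halfspace:
  assumes q: "\<bar>q\<bar> \<ge> 2" and C: "C_left_order regular_lang (BS q) R"
  shows "\<not> exp_halfspace (positive_cone (BS q) R)"
proof
  assume half: "exp_halfspace (positive_cone (BS q) R)"
  obtain X \<pi> L where lo: "left_order (BS q) R" and X: "finite X"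
    and \<pi>: "\<pi> [] = \<one>\<^bsub>BS q\<^esub>" "\<forall>u\<in>lists X. \<forall>v\<in>lists X. \<pi> (u @ v) = \<pi> u \<otimes>\<^bsub>BS q\<^esub> \<pi> v"
      "\<pi> ` lists X = carrier (BS q)"
    and L: "regular_lang X L" "\<pi> ` L = positive_cone (BS q) R"
    using C unfolding C_left_order_def by (elim conjE exE) blast
  obtain Q I F D where Q: "finite Q" "F \<subseteq> Q" "D \<subseteq> Q \<times> X \<times> Q"
    and L_def: "L = {w \<in> lists X. \<exists>p\<in>I. \<exists>r\<in>F. nfa_run D p w r}"
    using L(1) unfolding regular_lang_def by (elim conjE exE) blast
  interpret bs_left_order q R by (rule bs_left_orderI[OF lo])
  interpret bs_word_hom q X \<pi> using q X \<pi> by unfold_locales auto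
  obtain e where e: "\<And>x. x \<in> X \<Longrightarrow> has_denom_pow q e (bs_transl q (\<pi> [x]))"
    using letter_denom_bound by blast
  obtain s where s: "\<And>x. x \<in> X \<Longrightarrow> \<bar>bs_exp (\<pi> [x])\<bar> < int s"
    using letter_exp_bound by blast
  let ?K = "card Q * s" and ?wt = "\<lambda>x. bs_exp (\<pi> [x])"
  obtain t where t: "t \<in> positive_cone (BS q) R" "bs_exp t = 0" "\<not> has_denom_pow q (e + ?K) (bs_transl q t)"
    using pos_kernel_elem_without_denom[OF q] by blast
  then obtain w where "w \<in> L" "\<pi> w = t" using L(2) by (metis imageE)
  then obtain p r where w: "w \<in> lists X" "bs_exp (\<pi> w) = 0" "\<not> has_denom_pow q (e + ?K) (bs_transl q (\<pi> w))"
    and run: "nfa_run D p w r" "p \<in> I" "r \<in> F"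
    using t unfolding L_def by blast
  \<comment> \<open>A word for an element of small translation must dip deep in exponent, and a loop of
    negative exponent on the way can be pumped up or down.\<close>
  obtain i0 where "i0 \<le> length w" "bs_exp (\<pi> (take i0 w)) < - int ?K"
    using has_denom_pow_if_prefixes_bounded[OF e w(1)] w(3) by force
  moreover have "take i0 w \<in> lists X" using w(1) by (meson in_listsD in_listsI in_set_takeD)
  ultimately have deep: "i0 \<le> length w" "sum_list (map ?wt (take i0 w)) < - int ?K"
    by (simp_all add: bs_exp_pi)
  have "r \<in> Q" "\<And>x. x \<in> set w \<Longrightarrow> \<bar>?wt x\<bar> < int s" using Q(2) run(3) s w(1) by auto
  then obtain u v z where uvz: "w = u @ v @ z" "sum_list (map ?wt v) < 0"
    and runs: "nfa_run D p (u @ z) r" "nfa_run D p (u @ v @ v @ z) r"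
    using nfa_run_pump_descending[OF run(1) Q(3,1) _ _ deep] by blast
  have uvz_X: "u \<in> lists X" "v \<in> lists X" "z \<in> lists X" using w(1) uvz(1) by auto
  have "u @ z \<in> L" "u @ v @ v @ z \<in> L" using runs uvz_X run L_def by (auto simp: L_def)
  hence "\<pi> (u @ z) \<in> positive_cone (BS q) R" "\<pi> (u @ v @ v @ z) \<in> positive_cone (BS q) R"
    using L(2) by blast+
  moreover have "bs_exp (\<pi> (u @ z)) > 0" "bs_exp (\<pi> (u @ v @ v @ z)) < 0"
    using w(2) uvz uvz_X by (simp_all add: bs_exp_pi)
  ultimately show False using half unfolding exp_halfspace_def by force
qed

section \<open>Regular and one-counter positive cones\<close>

definition gen_letter :: "nat \<Rightarrow> gen" where
  "gen_letter n = (if n = 0 then Ga else if n = 1 then Gai else if n = 2 then Gb else Gbi)"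

fun letter_code :: "gen \<Rightarrow> nat" where
  "letter_code Ga = 0" | "letter_code Gai = 1" | "letter_code Gb = 2" | "letter_code Gbi = 3"

definition gen_codes :: "nat set" where
  "gen_codes = {0, 1, 2, 3}"

definition eval_codes :: "int \<Rightarrow> nat list \<Rightarrow> gen list set" where
  "eval_codes q w = bs_class q (map gen_letter w)"

definition codes_exp :: "nat list \<Rightarrow> int" where
  "codes_exp w = word_exp (map gen_letter w)"

definition codes_transl :: "int \<Rightarrow> nat list \<Rightarrow> real" where
  "codes_transl q w = word_act q (map gen_letter w) 0"

lemma gen_letter_simps [simp]:
  "gen_letter 0 = Ga" "gen_letter 1 = Gai" "gen_letter (Suc 0) = Gai" "gen_letter 2 = Gb" "gen_letter 3 = Gbi"
  by (simp_all add: gen_letter_def)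

lemma gen_codes_simps [simp]: "0 \<in> gen_codes" "1 \<in> gen_codes" "Suc 0 \<in> gen_codes" "2 \<in> gen_codes" "3 \<in> gen_codes"
  by (simp_all add: gen_codes_def)

lemma codes_exp_simps [simp]:
  "codes_exp [] = 0" "codes_exp (x # w) = gen_exp (gen_letter x) + codes_exp w"
  "codes_exp (u @ w) = codes_exp u + codes_exp w"
  by (simp_all add: codes_exp_def)

lemma codes_transl_simps [simp]:
  "codes_transl q [] = 0" "codes_transl q (x # w) = gen_act q (gen_letter x) (codes_transl q w)"
  by (simp_all add: codes_transl_def)

lemma eval_codes_in_carrier [simp]: "eval_codes q w \<in> carrier (BS q)"
  by (simp add: eval_codes_def)

lemma bs_exp_eval_codes [simp]: "bs_exp (eval_codes q w) = codes_exp w"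
  by (simp add: eval_codes_def codes_exp_def)

lemma bs_transl_eval_codes [simp]: "q \<noteq> 0 \<Longrightarrow> bs_transl q (eval_codes q w) = codes_transl q w"
  by (simp add: eval_codes_def codes_transl_def)

lemma eval_codes_surj: "eval_codes q ` lists gen_codes = carrier (BS q)"
proof
  show "carrier (BS q) \<subseteq> eval_codes q ` lists gen_codes"
  proof
    fix g assume "g \<in> carrier (BS q)"
    then obtain u where u: "g = bs_class q u" by (auto simp: BS_carrier)
    have "gen_letter (letter_code c) = c" for c by (cases c) simp_all
    moreover have "letter_code c \<in> gen_codes" for c by (cases c) simp_all
    ultimately have "eval_codes q (map letter_code u) = g" "map letter_code u \<in> lists gen_codes"
      by (auto simp: eval_codes_def u comp_def)
    thus "g \<in> eval_codes q ` lists gen_codes" by (metis imageI)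
  qed
qed auto

lemma admits_C_left_order_if_cone_lang:
  assumes "left_cone (BS q) P" "L \<subseteq> lists gen_codes" "C gen_codes L" "eval_codes q ` L = P"
  shows "admits_C_left_order C (BS q)"
  unfolding admits_C_left_order_def C_left_order_def
proof (intro exI conjI)
  show "left_order (BS q) (cone_rel (BS q) P)" by (rule BS.left_order_cone_rel(1)[OF assms(1)])
  show "eval_codes q ` L = positive_cone (BS q) (cone_rel (BS q) P)"
    using BS.left_order_cone_rel(2)[OF assms(1)] assms(4) by simp
qed (use assms eval_codes_surj in \<open>auto simp: gen_codes_def eval_codes_def BS_one BS_mult\<close>)

definition lex_cone :: "int \<Rightarrow> gen list set set" where
  "lex_cone q = {g \<in> carrier (BS q). bs_exp g > 0 \<or> (bs_exp g = 0 \<and> bs_transl q g > 0)}"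

definition affine_cone :: "int \<Rightarrow> gen list set set" where
  "affine_cone q = {g \<in> carrier (BS q). bs_transl q g > 0 \<or> (bs_transl q g = 0 \<and> bs_exp g > 0)}"

definition exp_cone :: "gen list set set" where
  "exp_cone = {g \<in> carrier (BS 0). bs_exp g > 0}"

lemma left_cone_lex_cone: "q \<noteq> 0 \<Longrightarrow> left_cone (BS q) (lex_cone q)"
  unfolding left_cone_def
proof (intro conjI ballI impI)
  fix g assume q: "q \<noteq> 0" and g: "g \<in> carrier (BS q)" "g \<noteq> \<one>\<^bsub>BS q\<^esub>"
  thus "g \<in> lex_cone q \<or> inv\<^bsub>BS q\<^esub> g \<in> lex_cone q"
    using BS_eq_one_iff[OF q g(1)] by (auto simp: lex_cone_def bs_exp_inv bs_transl_inv)
qed (auto simp: lex_cone_def bs_exp_mult bs_transl_mult)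

lemma left_cone_affine_cone:
  assumes q: "q > 0"
  shows "left_cone (BS q) (affine_cone q)"
proof -
  have pw: "(of_int q :: real) powi n > 0" for n using q by simp
  show ?thesis
    unfolding left_cone_def
  proof (intro conjI ballI impI)
    fix g h assume g: "g \<in> affine_cone q" and h: "h \<in> affine_cone q"
    have "bs_transl q g \<ge> 0" "of_int q powi bs_exp g * bs_transl q h \<ge> 0"
      using g h pw[of "bs_exp g"] by (auto simp: affine_cone_def)
    thus "g \<otimes>\<^bsub>BS q\<^esub> h \<in> affine_cone q"
      using g h q pw[of "bs_exp g"]
      by (auto simp: affine_cone_def bs_transl_mult bs_exp_mult add_pos_nonneg add_nonneg_pos)
  next
    fix g assume g: "g \<in> carrier (BS q)" "g \<noteq> \<one>\<^bsub>BS q\<^esub>"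
    thus "g \<in> affine_cone q \<or> inv\<^bsub>BS q\<^esub> g \<in> affine_cone q"
      using BS_eq_one_iff[of q g] q pw[of "- bs_exp g"]
      by (auto simp: affine_cone_def bs_exp_inv bs_transl_inv mult_pos_neg linorder_neq_iff)
  qed (use q in \<open>auto simp: affine_cone_def\<close>)
qed

lemma left_cone_exp_cone: "left_cone (BS 0) exp_cone"
  unfolding left_cone_def
proof (intro conjI ballI impI)
  fix g assume "g \<in> carrier (BS 0)" "g \<noteq> \<one>\<^bsub>BS 0\<^esub>"
  thus "g \<in> exp_cone \<or> inv\<^bsub>BS 0\<^esub> g \<in> exp_cone"
    using BS_zero_eq_iff[of g "\<one>\<^bsub>BS 0\<^esub>"] by (auto simp: exp_cone_def bs_exp_inv)
qed (auto simp: exp_cone_def bs_exp_mult)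

lemma nfa_run_replicate: "(p, x, p) \<in> D \<Longrightarrow> nfa_run D p w r \<Longrightarrow> nfa_run D p (replicate n x @ w) r"
  by (induction n) (auto intro: nfa_run.intros)

lemma nfa_run_invariant:
  assumes step: "\<And>p x p' w. (p, x, p') \<in> D \<Longrightarrow> w \<in> S p' \<Longrightarrow> x # w \<in> S p"
    and final: "\<And>r. r \<in> F \<Longrightarrow> [] \<in> S r"
  shows "nfa_run D p w r \<Longrightarrow> r \<in> F \<Longrightarrow> w \<in> S p"
  by (induction rule: nfa_run.induct) (auto intro: step final)

definition b_codes :: "int \<Rightarrow> nat list" where
  "b_codes k = (if 0 \<le> k then replicate (nat k) 2 else replicate (nat (- k)) 3)"

definition nf_codes :: "nat \<Rightarrow> int \<Rightarrow> nat \<Rightarrow> nat list" where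
  "nf_codes m k m' = replicate m 1 @ b_codes k @ replicate m' 0"

lemma replicate_in_lists [simp]: "x \<in> A \<Longrightarrow> replicate n x \<in> lists A"
  by (induction n) auto

lemma b_codes_in_lists [simp]: "b_codes k \<in> lists gen_codes"
  by (simp add: b_codes_def)

lemma nf_codes_in_lists [simp]: "nf_codes m k m' \<in> lists gen_codes"
  by (simp add: nf_codes_def)

lemma eval_codes_nf_codes: "eval_codes q (nf_codes m k m') = bs_class q (nf_word m k m')"
  by (simp add: eval_codes_def nf_codes_def nf_word_def b_codes_def bpow_def)

lemma codes_exp_replicate_0 [simp]: "codes_exp (replicate n 0) = int n"
  by (induction n) simp_all

lemma codes_exp_b_codes [simp]: "codes_exp (b_codes k) = 0"
  by (simp add: codes_exp_def b_codes_def)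

lemma codes_transl_b_codes [simp]: "codes_transl q (b_codes k @ w) = codes_transl q w + of_int k"
  by (simp add: codes_transl_def b_codes_def)

text \<open>Accepts the codes of a^-m b^k a^m' with k > 0 and of a^n with n > 0.\<close>

definition affine_nfa :: "(nat \<times> nat \<times> nat) set" where
  "affine_nfa = {(0, 1, 0), (0, 2, 1), (1, 2, 1), (1, 0, 2), (2, 0, 2), (4, 0, 3), (3, 0, 3)}"

definition affine_lang :: "nat list set" where
  "affine_lang = {w \<in> lists gen_codes. \<exists>p\<in>{0, 4}. \<exists>r\<in>{1, 2, 3}. nfa_run affine_nfa p w r}"

definition affine_inv :: "int \<Rightarrow> nat \<Rightarrow> nat list set" where
  "affine_inv q p = (if p = 0 then {w. codes_transl q w > 0}
     else if p = 1 \<or> p = 2 then {w. codes_transl q w \<ge> 0}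
     else if p = 3 then {w. codes_transl q w = 0 \<and> codes_exp w \<ge> 0}
     else {w. codes_transl q w = 0 \<and> codes_exp w > 0})"

lemma regular_affine_lang: "regular_lang gen_codes affine_lang"
  unfolding regular_lang_def affine_lang_def
  by (rule exI[of _ "{0, 1, 2, 3, 4}"], rule exI[of _ "{0, 4}"], rule exI[of _ "{1, 2, 3}"],
      rule exI[of _ affine_nfa]) (auto simp: affine_nfa_def gen_codes_def)

lemma affine_lang_sound:
  assumes q: "q > 0" and w: "w \<in> affine_lang"
  shows "eval_codes q w \<in> affine_cone q"
proof -
  obtain p r where run: "p \<in> {0, 4}" "r \<in> {1, 2, 3}" "nfa_run affine_nfa p w r"
    using w by (auto simp: affine_lang_def)
  have "x # w \<in> affine_inv q p" if "(p, x, p') \<in> affine_nfa" "w \<in> affine_inv q p'" for p x p' w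
    using that q by (auto simp: affine_nfa_def affine_inv_def)
  moreover have "[] \<in> affine_inv q r" if "r \<in> {1, 2, 3}" for r
    using that by (auto simp: affine_inv_def)
  ultimately have "w \<in> affine_inv q p" by (rule nfa_run_invariant[OF _ _ run(3,2)])
  thus ?thesis using run(1) q by (auto simp: affine_inv_def affine_cone_def)
qed

lemma affine_lang_complete:
  assumes q: "q > 0" and g: "g \<in> affine_cone q"
  shows "g \<in> eval_codes q ` affine_lang"
proof -
  have g_carrier: "g \<in> carrier (BS q)" using g by (simp add: affine_cone_def)
  obtain m k m' where g_nf: "g = bs_class q (nf_word m k m')" using BS_normal_form[OF g_carrier] by blast
  have accept: "w \<in> affine_lang" if "w \<in> lists gen_codes" "nfa_run affine_nfa p w r" "p \<in> {0, 4}" "r \<in> {1, 2, 3}" for w p r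
    using that by (auto simp: affine_lang_def)
  show ?thesis
  proof (cases "bs_transl q g > 0")
    case True
    moreover have "(of_int q :: real) powi (- int m) > 0" using q by simp
    ultimately have "k > 0" using q by (simp add: g_nf word_act_nf_word zero_less_mult_iff)
    then obtain k0 where k0: "nat k = Suc k0" by (metis gr0_implies_Suc zero_less_nat_eq)
    obtain r where r: "nfa_run affine_nfa 1 (replicate m' 0) r" "r \<in> {1, 2, 3}"
    proof (cases m')
      case (Suc m0)
      have "nfa_run affine_nfa 2 (replicate m0 0 @ []) 2"
        by (rule nfa_run_replicate) (auto simp: affine_nfa_def intro: nfa_run.intros)
      hence "nfa_run affine_nfa 1 (replicate m' 0) 2" using Suc by (auto simp: affine_nfa_def intro: nfa_run.intros)
      thus ?thesis using that by blast
    qed (use that in \<open>auto intro: nfa_run.intros\<close>)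
    have "nfa_run affine_nfa 1 (replicate k0 2 @ replicate m' 0) r"
      by (rule nfa_run_replicate[OF _ r(1)]) (simp add: affine_nfa_def)
    hence "nfa_run affine_nfa 0 (replicate m 1 @ (2 # replicate k0 2) @ replicate m' 0) r"
      by (intro nfa_run_replicate) (auto simp: affine_nfa_def intro: nfa_run.intros)
    hence "nf_codes m k m' \<in> affine_lang"
      using \<open>k > 0\<close> k0 r(2) by (intro accept[of _ 0 r]) (simp_all add: nf_codes_def b_codes_def)
    thus ?thesis using g_nf eval_codes_nf_codes by (metis image_eqI)
  next
    case False
    hence exp: "bs_transl q g = 0" "bs_exp g > 0" using g by (auto simp: affine_cone_def)
    then obtain n where n: "bs_exp g = int (Suc n)" by (metis pos_int_cases Suc_pred)
    have "nfa_run affine_nfa 3 (replicate n 0 @ []) 3"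
      by (rule nfa_run_replicate) (auto simp: affine_nfa_def intro: nfa_run.intros)
    hence "replicate (Suc n) 0 \<in> affine_lang"
      by (intro accept[of _ 4 3]) (auto simp: affine_nfa_def intro: nfa_run.intros)
    moreover have "eval_codes q (replicate (Suc n) 0) = g"
      using q exp n g_carrier BS_eq_iff[of q "eval_codes q (replicate (Suc n) 0)" g]
      by (simp add: codes_transl_def)
    ultimately show ?thesis by blast
  qed
qed

lemma regular_left_order_of_pos:
  assumes "q > 0"
  shows "admits_C_left_order regular_lang (BS q)"
proof (rule admits_C_left_order_if_cone_lang[where C = regular_lang, OF left_cone_affine_cone[OF assms] _ regular_affine_lang])
  show "eval_codes q ` affine_lang = affine_cone q"
    using affine_lang_sound[OF assms] affine_lang_complete[OF assms] by blast
qed (auto simp: affine_lang_def)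

lemma codes_transl_replicate_0 [simp]: "codes_transl q (replicate n 0) = 0"
  by (simp add: codes_transl_def)

definition exp_nfa :: "(nat \<times> nat \<times> nat) set" where
  "exp_nfa = {(0, 0, 1), (1, 0, 1)}"

definition exp_lang :: "nat list set" where
  "exp_lang = {w \<in> lists gen_codes. \<exists>p\<in>{0}. \<exists>r\<in>{1}. nfa_run exp_nfa p w r}"

lemma regular_exp_lang: "regular_lang gen_codes exp_lang"
  unfolding regular_lang_def exp_lang_def
  by (rule exI[of _ "{0, 1}"], rule exI[of _ "{0}"], rule exI[of _ "{1}"], rule exI[of _ exp_nfa])
     (auto simp: exp_nfa_def gen_codes_def)

lemma exp_lang_sound:
  assumes "w \<in> exp_lang"
  shows "eval_codes 0 w \<in> exp_cone"
proof -
  let ?inv = "\<lambda>p::nat. if p = 0 then {w. codes_exp w > 0} else {w. codes_exp w \<ge> 0}"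
  have run: "nfa_run exp_nfa 0 w 1" using assms by (simp add: exp_lang_def)
  have "w \<in> ?inv 0"
    by (rule nfa_run_invariant[of exp_nfa ?inv "{1}", OF _ _ run]) (auto simp: exp_nfa_def)
  thus ?thesis by (simp add: exp_cone_def)
qed

lemma exp_lang_complete:
  assumes "g \<in> exp_cone"
  shows "g \<in> eval_codes 0 ` exp_lang"
proof -
  obtain n where n: "bs_exp g = int (Suc n)" and g: "g \<in> carrier (BS 0)"
    using assms by (metis exp_cone_def mem_Collect_eq pos_int_cases Suc_pred)
  have "nfa_run exp_nfa 1 (replicate n 0 @ []) 1"
    by (rule nfa_run_replicate) (auto simp: exp_nfa_def intro: nfa_run.intros)
  hence "replicate (Suc n) 0 \<in> exp_lang" by (auto simp: exp_lang_def exp_nfa_def intro: nfa_run.intros)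
  moreover have "eval_codes 0 (replicate (Suc n) 0) = g"
    using BS_zero_eq_iff[OF eval_codes_in_carrier g] n by simp
  ultimately show ?thesis by blast
qed

lemma regular_left_order_of_zero: "admits_C_left_order regular_lang (BS 0)"
proof (rule admits_C_left_order_if_cone_lang[where C = regular_lang, OF left_cone_exp_cone _ regular_exp_lang])
  show "eval_codes 0 ` exp_lang = exp_cone"
    using exp_lang_sound exp_lang_complete by blast
qed (auto simp: exp_lang_def)

text \<open>Accepts the codes of b^j a^n with n > 0 and of b^k with k > 0.\<close>

definition lex_nfa :: "(nat \<times> nat \<times> nat) set" where
  "lex_nfa = {(0, 2, 0), (0, 0, 2), (1, 3, 1), (1, 0, 2), (2, 0, 2), (5, 2, 6), (6, 2, 6)}"

definition lex_lang :: "nat list set" where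
  "lex_lang = {w \<in> lists gen_codes. \<exists>p\<in>{0, 1, 5}. \<exists>r\<in>{2, 6}. nfa_run lex_nfa p w r}"

definition lex_inv :: "nat \<Rightarrow> nat list set" where
  "lex_inv p = (if p = 0 \<or> p = 1 then {w. codes_exp w > 0} else if p = 2 then {w. codes_exp w \<ge> 0}
     else if p = 6 then {w. codes_exp w = 0 \<and> codes_transl (-1) w \<ge> 0}
     else {w. codes_exp w = 0 \<and> codes_transl (-1) w > 0})"

lemma regular_lex_lang: "regular_lang gen_codes lex_lang"
  unfolding regular_lang_def lex_lang_def
  by (rule exI[of _ "{0, 1, 2, 5, 6}"], rule exI[of _ "{0, 1, 5}"], rule exI[of _ "{2, 6}"],
      rule exI[of _ lex_nfa]) (auto simp: lex_nfa_def gen_codes_def)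

lemma lex_lang_sound:
  assumes "w \<in> lex_lang"
  shows "eval_codes (-1) w \<in> lex_cone (-1)"
proof -
  obtain p r where run: "p \<in> {0, 1, 5}" "r \<in> {2, 6}" "nfa_run lex_nfa p w r"
    using assms by (auto simp: lex_lang_def)
  have "x # w \<in> lex_inv p" if "(p, x, p') \<in> lex_nfa" "w \<in> lex_inv p'" for p x p' w
    using that by (auto simp: lex_nfa_def lex_inv_def)
  moreover have "[] \<in> lex_inv r" if "r \<in> {2, 6}" for r
    using that by (auto simp: lex_inv_def)
  ultimately have "w \<in> lex_inv p" by (rule nfa_run_invariant[OF _ _ run(3,2)])
  thus ?thesis using run(1) by (auto simp: lex_inv_def lex_cone_def)
qed

lemma bs_transl_minus_one_int:
  assumes "g \<in> carrier (BS (-1))"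
  shows "\<exists>j::int. bs_transl (-1) g = of_int j"
proof -
  obtain K z where Kz: "(-1 :: real) ^ K * bs_transl (-1) g = of_int z"
    using bs_transl_has_denom_pow[OF _ assms] by (auto simp: has_denom_pow_def)
  have "bs_transl (-1) g = (-1) ^ K * ((-1) ^ K * bs_transl (-1) g)"
    by (simp flip: mult.assoc power_mult_distrib)
  also have "\<dots> = of_int ((-1) ^ K * z)" by (simp add: Kz)
  finally show ?thesis by blast
qed

lemma lex_lang_complete:
  assumes g: "g \<in> lex_cone (-1)"
  shows "g \<in> eval_codes (-1) ` lex_lang"
proof -
  have g_carrier: "g \<in> carrier (BS (-1))" using g by (simp add: lex_cone_def)
  obtain j where j: "bs_transl (-1) g = of_int j" using bs_transl_minus_one_int[OF g_carrier] by blast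
  have eval: "eval_codes (-1) w = g" if "codes_exp w = bs_exp g" "codes_transl (-1) w = of_int j" for w
    using BS_eq_iff[of "-1" "eval_codes (-1) w" g] that j g_carrier by simp
  show ?thesis
  proof (cases "bs_exp g > 0")
    case True
    then obtain n where n: "bs_exp g = int (Suc n)" by (metis pos_int_cases Suc_pred)
    have end_run: "nfa_run lex_nfa 2 (replicate n 0 @ []) 2"
      by (rule nfa_run_replicate) (auto simp: lex_nfa_def intro: nfa_run.intros)
    have "nfa_run lex_nfa (if 0 \<le> j then 0 else 1) (b_codes j @ replicate (Suc n) 0) 2"
    proof (cases "0 \<le> j")
      case True
      have "nfa_run lex_nfa 0 (replicate (nat j) 2 @ (0 # replicate n 0)) 2"
        using end_run by (intro nfa_run_replicate) (auto simp: lex_nfa_def intro: nfa_run.intros)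
      thus ?thesis using True by (simp add: b_codes_def)
    next
      case False
      have "nfa_run lex_nfa 1 (replicate (nat (- j)) 3 @ (0 # replicate n 0)) 2"
        using end_run by (intro nfa_run_replicate) (auto simp: lex_nfa_def intro: nfa_run.intros)
      thus ?thesis using False by (simp add: b_codes_def)
    qed
    hence "b_codes j @ replicate (Suc n) 0 \<in> lex_lang" by (auto simp: lex_lang_def split: if_split_asm)
    moreover have "eval_codes (-1) (b_codes j @ replicate (Suc n) 0) = g"
      using n by (intro eval) simp_all
    ultimately show ?thesis by blast
  next
    case False
    hence "bs_exp g = 0" "j > 0" using g j by (auto simp: lex_cone_def)
    then obtain j0 where j0: "nat j = Suc j0" by (metis gr0_implies_Suc zero_less_nat_eq)
    have "nfa_run lex_nfa 6 (replicate j0 2 @ []) 6"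
      by (rule nfa_run_replicate) (auto simp: lex_nfa_def intro: nfa_run.intros)
    hence "b_codes j \<in> lex_lang"
      using \<open>j > 0\<close> j0 by (auto simp: lex_lang_def lex_nfa_def b_codes_def intro: nfa_run.intros)
    moreover have "eval_codes (-1) (b_codes j) = g"
      using \<open>bs_exp g = 0\<close> codes_transl_b_codes[of "-1" j "[]"] by (intro eval) simp_all
    ultimately show ?thesis by blast
  qed
qed

lemma regular_left_order_of_minus_one: "admits_C_left_order regular_lang (BS (-1))"
proof (rule admits_C_left_order_if_cone_lang[where C = regular_lang, OF left_cone_lex_cone _ regular_lex_lang])
  show "eval_codes (-1) ` lex_lang = lex_cone (-1)"
    using lex_lang_sound lex_lang_complete by blast
qed (auto simp: lex_lang_def)

text \<open>The first branch accepts the codes of a^-m b^k a^m' with m < m', counting m on the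
  stack; the second, needed only for q \<noteq> 0, accepts those of a^-2j b^k a^2j with k > 0, where
  the states 5 and 6 record the parity of the number of a^-1 read.\<close>

definition oc_exp_trans :: "oc_trans set" where
  "oc_exp_trans = {(10, None, True, 0, 0),
     (0, Some 1, True, 0, 1), (0, Some 1, False, 0, 2),
     (0, None, True, 1, 0), (0, None, False, 1, 1),
     (0, None, True, 2, 0), (0, None, False, 2, 1),
     (1, Some 2, True, 1, 0), (1, Some 2, False, 1, 1),
     (2, Some 3, True, 2, 0), (2, Some 3, False, 2, 1),
     (1, None, True, 3, 0), (1, None, False, 3, 1),
     (2, None, True, 3, 0), (2, None, False, 3, 1),
     (3, Some 0, False, 3, 0), (3, Some 0, True, 4, 0), (4, Some 0, True, 4, 0)}"

definition oc_transl_trans :: "oc_trans set" where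
  "oc_transl_trans = {(10, None, True, 5, 0),
     (5, Some 1, True, 6, 1), (5, Some 1, False, 6, 2),
     (6, Some 1, True, 5, 1), (6, Some 1, False, 5, 2),
     (5, Some 2, True, 7, 0), (5, Some 2, False, 7, 1),
     (7, Some 2, True, 7, 0), (7, Some 2, False, 7, 1),
     (7, None, True, 8, 0), (7, None, False, 8, 1),
     (8, Some 0, False, 8, 0), (8, None, True, 9, 0)}"

definition oc_trans :: "int \<Rightarrow> oc_trans set" where
  "oc_trans q = oc_exp_trans \<union> (if q = 0 then {} else oc_transl_trans)"

definition oc_lang :: "int \<Rightarrow> nat list set" where
  "oc_lang q = {w \<in> lists gen_codes. \<exists>r\<in>{4, 9}. \<exists>m. oc_run (oc_trans q) 10 0 w r m}"

definition oc_inv :: "int \<Rightarrow> nat \<Rightarrow> nat \<Rightarrow> nat list set" where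
  "oc_inv q p c = (if p = 10 then
       (if q = 0 then {w. codes_exp w > 0} else {w. codes_exp w > 0 \<or> (codes_exp w = 0 \<and> codes_transl q w > 0)})
     else if p \<le> 3 then {w. codes_exp w > int c}
     else if p = 4 then {w. codes_exp w \<ge> 0}
     else if p = 5 then {w. codes_exp w = int c \<and> codes_transl q w > 0}
     else if p = 6 then {w. codes_exp w = int c \<and> of_int q * codes_transl q w > 0}
     else if p = 7 then {w. codes_exp w = int c \<and> codes_transl q w \<ge> 0}
     else if p = 8 then {w. codes_exp w = int c \<and> codes_transl q w = 0}
     else {w. codes_exp w = 0 \<and> codes_transl q w = 0})"

definition oc_cone :: "int \<Rightarrow> gen list set set" where
  "oc_cone q = (if q = 0 then exp_cone else lex_cone q)"

lemma one_counter_oc_lang: "one_counter_lang gen_codes (oc_lang q)"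
  unfolding one_counter_lang_def oc_lang_def
  by (rule exI[of _ "{0..10}"], rule exI[of _ 10], rule exI[of _ "{4, 9}"], rule exI[of _ "oc_trans q"])
     (auto simp: oc_trans_def oc_exp_trans_def oc_transl_trans_def gen_codes_def)

lemma divide_pos_iff_mult_pos: "(q::real) \<noteq> 0 \<Longrightarrow> a / q > 0 \<longleftrightarrow> q * a > 0"
  by (cases "q > 0") (auto simp: zero_less_divide_iff zero_less_mult_iff)

lemma oc_run_invariant: "oc_run (oc_trans q) p c w r m \<Longrightarrow> r \<in> {4, 9} \<Longrightarrow> w \<in> oc_inv q p c"
proof (induction rule: oc_run.induct)
  case (oc_nil p n)
  thus ?case by (auto simp: oc_inv_def)
next
  case (oc_read_zero p x p' k w r m)
  from oc_read_zero.hyps(1) oc_read_zero.IH[OF oc_read_zero.prems] show ?case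
    by (auto simp: oc_trans_def oc_exp_trans_def oc_transl_trans_def oc_inv_def divide_pos_iff_mult_pos
        split: if_splits)
next
  case (oc_read_pos p x p' n k w r m)
  from oc_read_pos.hyps(1) oc_read_pos.IH[OF oc_read_pos.prems] show ?case
    by (auto simp: oc_trans_def oc_exp_trans_def oc_transl_trans_def oc_inv_def divide_pos_iff_mult_pos
        split: if_splits)
next
  case (oc_eps_zero p p' k w r m)
  from oc_eps_zero.hyps(1) oc_eps_zero.IH[OF oc_eps_zero.prems] show ?case
    by (auto simp: oc_trans_def oc_exp_trans_def oc_transl_trans_def oc_inv_def split: if_splits)
next
  case (oc_eps_pos p p' n k w r m)
  from oc_eps_pos.hyps(1) oc_eps_pos.IH[OF oc_eps_pos.prems] show ?case
    by (auto simp: oc_trans_def oc_exp_trans_def oc_transl_trans_def oc_inv_def split: if_splits)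
qed

lemma oc_lang_sound: "w \<in> oc_lang q \<Longrightarrow> eval_codes q w \<in> oc_cone q"
  using oc_run_invariant[of q 10 0 w]
  by (cases "q = 0") (auto simp: oc_lang_def oc_inv_def oc_cone_def exp_cone_def lex_cone_def)

lemma oc_push: "(p, Some x, True, p', 1) \<in> D \<Longrightarrow> (p, Some x, False, p', 2) \<in> D \<Longrightarrow>
    oc_run D p' (Suc c) w r m \<Longrightarrow> oc_run D p c (x # w) r m"
  by (cases c) (auto intro: oc_run.intros)

lemma oc_keep: "(p, Some x, True, p', 0) \<in> D \<Longrightarrow> (p, Some x, False, p', 1) \<in> D \<Longrightarrow>
    oc_run D p' c w r m \<Longrightarrow> oc_run D p c (x # w) r m"
  by (cases c) (auto intro: oc_run.intros)

lemma oc_keep_eps: "(p, None, True, p', 0) \<in> D \<Longrightarrow> (p, None, False, p', 1) \<in> D \<Longrightarrow>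
    oc_run D p' c w r m \<Longrightarrow> oc_run D p c w r m"
  by (cases c) (auto intro: oc_run.intros)

lemma oc_pop: "(p, Some x, False, p', 0) \<in> D \<Longrightarrow> oc_run D p' c w r m \<Longrightarrow> oc_run D p (Suc c) (x # w) r m"
  using oc_run.oc_read_pos[of p x p' 0 D c w r m] by simp

lemma oc_zero_read: "(p, Some x, True, p', 0) \<in> D \<Longrightarrow> oc_run D p' 0 w r m \<Longrightarrow> oc_run D p 0 (x # w) r m"
  by (auto intro: oc_run.intros)

lemma oc_zero_eps: "(p, None, True, p', 0) \<in> D \<Longrightarrow> oc_run D p' 0 w r m \<Longrightarrow> oc_run D p 0 w r m"
  by (auto intro: oc_run.intros)

lemma oc_push_loop: "(p, Some x, True, p, 1) \<in> D \<Longrightarrow> (p, Some x, False, p, 2) \<in> D \<Longrightarrow>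
    oc_run D p (c + n) w r m \<Longrightarrow> oc_run D p c (replicate n x @ w) r m"
proof (induction n arbitrary: c)
  case (Suc n)
  hence "oc_run D p (Suc c) (replicate n x @ w) r m" by simp
  thus ?case using oc_push[OF Suc.prems(1,2)] by simp
qed simp

lemma oc_keep_loop: "(p, Some x, True, p, 0) \<in> D \<Longrightarrow> (p, Some x, False, p, 1) \<in> D \<Longrightarrow>
    oc_run D p c w r m \<Longrightarrow> oc_run D p c (replicate n x @ w) r m"
  by (induction n) (auto intro: oc_keep)

lemma oc_zero_loop: "(p, Some x, True, p, 0) \<in> D \<Longrightarrow>
    oc_run D p 0 w r m \<Longrightarrow> oc_run D p 0 (replicate n x @ w) r m"
  by (induction n) (auto intro: oc_zero_read)

lemma oc_pop_loop: "(p, Some x, False, p, 0) \<in> D \<Longrightarrow>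
    oc_run D p c w r m \<Longrightarrow> oc_run D p (c + n) (replicate n x @ w) r m"
  by (induction n) (auto intro: oc_pop)

lemma oc_push_pair_loop:
  assumes "(p, Some x, True, p', 1) \<in> D" "(p, Some x, False, p', 2) \<in> D"
    "(p', Some x, True, p, 1) \<in> D" "(p', Some x, False, p, 2) \<in> D"
  shows "oc_run D p (c + 2 * n) w r m \<Longrightarrow> oc_run D p c (replicate (2 * n) x @ w) r m"
proof (induction n arbitrary: c)
  case (Suc n)
  hence "oc_run D p (Suc (Suc c)) (replicate (2 * n) x @ w) r m" by simp
  hence "oc_run D p c (x # x # replicate (2 * n) x @ w) r m" using oc_push assms by metis
  thus ?case by simp
qed simp

lemma oc_run_exp_pos:
  assumes "m < m'"
  shows "oc_run (oc_trans q) 10 0 (nf_codes m k m') 4 0"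
proof -
  let ?D = "oc_trans q"
  have M: "(10, None, True, 0, 0) \<in> ?D"
    "(0, Some 1, True, 0, 1) \<in> ?D" "(0, Some 1, False, 0, 2) \<in> ?D"
    "(0, None, True, 1, 0) \<in> ?D" "(0, None, False, 1, 1) \<in> ?D"
    "(0, None, True, 2, 0) \<in> ?D" "(0, None, False, 2, 1) \<in> ?D"
    "(1, Some 2, True, 1, 0) \<in> ?D" "(1, Some 2, False, 1, 1) \<in> ?D"
    "(2, Some 3, True, 2, 0) \<in> ?D" "(2, Some 3, False, 2, 1) \<in> ?D"
    "(1, None, True, 3, 0) \<in> ?D" "(1, None, False, 3, 1) \<in> ?D"
    "(2, None, True, 3, 0) \<in> ?D" "(2, None, False, 3, 1) \<in> ?D"
    "(3, Some 0, False, 3, 0) \<in> ?D" "(3, Some 0, True, 4, 0) \<in> ?D" "(4, Some 0, True, 4, 0) \<in> ?D"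
    by (simp_all add: oc_trans_def oc_exp_trans_def)
  obtain d where d: "m' = m + Suc d" using less_imp_Suc_add[OF assms] by auto
  let ?tail = "replicate m 0 @ 0 # replicate d 0"
  have "oc_run ?D 3 0 (0 # replicate d 0) 4 0"
    using oc_zero_loop[OF M(18) oc_run.oc_nil, of d] by (intro oc_zero_read[OF M(17)]) simp
  hence tail: "oc_run ?D 3 m ?tail 4 0" using oc_pop_loop[OF M(16)] by fastforce
  have "oc_run ?D 0 m (b_codes k @ ?tail) 4 0"
  proof (cases "0 \<le> k")
    case True
    have "oc_run ?D 1 m (replicate (nat k) 2 @ ?tail) 4 0"
      using tail by (intro oc_keep_loop[OF M(8,9)] oc_keep_eps[OF M(12,13)])
    thus ?thesis using True by (intro oc_keep_eps[OF M(4,5)]) (simp add: b_codes_def)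
  next
    case False
    have "oc_run ?D 2 m (replicate (nat (- k)) 3 @ ?tail) 4 0"
      using tail by (intro oc_keep_loop[OF M(10,11)] oc_keep_eps[OF M(14,15)])
    thus ?thesis using False by (intro oc_keep_eps[OF M(6,7)]) (simp add: b_codes_def)
  qed
  hence "oc_run ?D 0 0 (replicate m 1 @ b_codes k @ ?tail) 4 0"
    by (intro oc_push_loop[OF M(2,3)]) simp
  moreover have "replicate m' (0::nat) = ?tail" unfolding d replicate_add by simp
  ultimately show ?thesis by (intro oc_zero_eps[OF M(1)]) (simp add: nf_codes_def)
qed

lemma oc_run_transl_pos:
  assumes "q \<noteq> 0" "k > 0"
  shows "oc_run (oc_trans q) 10 0 (nf_codes (2 * j) k (2 * j)) 9 0"
proof -
  let ?D = "oc_trans q"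
  have M: "(10, None, True, 5, 0) \<in> ?D"
    "(5, Some 1, True, 6, 1) \<in> ?D" "(5, Some 1, False, 6, 2) \<in> ?D"
    "(6, Some 1, True, 5, 1) \<in> ?D" "(6, Some 1, False, 5, 2) \<in> ?D"
    "(5, Some 2, True, 7, 0) \<in> ?D" "(5, Some 2, False, 7, 1) \<in> ?D"
    "(7, Some 2, True, 7, 0) \<in> ?D" "(7, Some 2, False, 7, 1) \<in> ?D"
    "(7, None, True, 8, 0) \<in> ?D" "(7, None, False, 8, 1) \<in> ?D"
    "(8, Some 0, False, 8, 0) \<in> ?D" "(8, None, True, 9, 0) \<in> ?D"
    using assms(1) by (simp_all add: oc_trans_def oc_transl_trans_def)
  obtain k0 where k0: "nat k = Suc k0" using assms(2) by (metis gr0_implies_Suc zero_less_nat_eq)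
  have "oc_run ?D 8 (0 + 2 * j) (replicate (2 * j) 0 @ []) 9 0"
    by (intro oc_pop_loop[OF M(12)] oc_zero_eps[OF M(13)] oc_run.oc_nil)
  hence "oc_run ?D 7 (2 * j) (replicate k0 2 @ replicate (2 * j) 0) 9 0"
    by (intro oc_keep_loop[OF M(8,9)] oc_keep_eps[OF M(10,11)]) simp
  hence "oc_run ?D 5 (0 + 2 * j) (2 # replicate k0 2 @ replicate (2 * j) 0) 9 0"
    by (simp add: oc_keep[OF M(6,7)])
  hence "oc_run ?D 5 0 (replicate (2 * j) 1 @ 2 # replicate k0 2 @ replicate (2 * j) 0) 9 0"
    by (rule oc_push_pair_loop[OF M(2-5)])
  thus ?thesis using assms(2) k0 by (intro oc_zero_eps[OF M(1)]) (simp add: nf_codes_def b_codes_def)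
qed

text \<open>Multiplying k by q^m, an element of exponent 0 gets a normal form with even m, where the
  sign of its translation is that of k.\<close>

lemma kernel_even_normal_form:
  assumes q: "q \<noteq> 0" and g: "g \<in> carrier (BS q)" "bs_exp g = 0" "bs_transl q g > 0"
  shows "\<exists>j k. k > 0 \<and> g = bs_class q (nf_word (2 * j) k (2 * j))"
proof -
  obtain m k m' where g_nf: "g = bs_class q (nf_word m k m')" using BS_normal_form[OF g(1)] by blast
  have "m' = m" using g(2) by (simp add: g_nf)
  define k' where "k' = k * q ^ m"
  have "(of_int q :: real) ^ m * of_int q powi (- int (2 * m)) = of_int q powi int m * of_int q powi (- int (2 * m))"
    by (simp only: power_int_of_nat)
  also have "\<dots> = of_int q powi (int m + - int (2 * m))"
    by (rule power_int_add[symmetric]) (use q in simp)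
  also have "int m + - int (2 * m) = - int m" by simp
  finally have "(of_int q :: real) ^ m * of_int q powi (- int (2 * m)) = of_int q powi (- int m)" .
  hence transl: "bs_transl q g = of_int k' * of_int q powi (- int (2 * m))"
    using q by (simp add: g_nf word_act_nf_word k'_def mult.assoc)
  moreover have "(of_int q :: real) powi (- int (2 * m)) > 0"
  proof -
    have "(of_int q :: real) powi (- int (2 * m)) = inverse ((of_int q ^ 2) ^ m)"
      by (simp only: power_int_minus power_int_of_nat power_mult)
    thus ?thesis using q by simp
  qed
  ultimately have "k' > 0" using g(3) by (simp add: zero_less_mult_iff)
  moreover have "g = bs_class q (nf_word (2 * m) k' (2 * m))"
    using BS_eq_iff[OF q g(1), of "bs_class q (nf_word (2 * m) k' (2 * m))"] g(2) transl q
    by (simp add: word_act_nf_word)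
  ultimately show ?thesis by blast
qed

lemma oc_lang_complete:
  assumes g: "g \<in> oc_cone q"
  shows "g \<in> eval_codes q ` oc_lang q"
proof -
  have g_carrier: "g \<in> carrier (BS q)" using g by (simp add: oc_cone_def exp_cone_def lex_cone_def split: if_splits)
  have accept: "g \<in> eval_codes q ` oc_lang q"
    if "oc_run (oc_trans q) 10 0 (nf_codes m k m') r 0" "r \<in> {4, 9}" "g = bs_class q (nf_word m k m')" for m k m' r
  proof -
    have "nf_codes m k m' \<in> oc_lang q" using that(1,2) nf_codes_in_lists unfolding oc_lang_def by blast
    thus ?thesis using that(3) eval_codes_nf_codes by (metis image_eqI)
  qed
  show ?thesis
  proof (cases "bs_exp g > 0")
    case True
    obtain m k m' where g_nf: "g = bs_class q (nf_word m k m')" using BS_normal_form[OF g_carrier] by blast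
    hence "m < m'" using True by simp
    thus ?thesis using accept oc_run_exp_pos g_nf by blast
  next
    case False
    hence "q \<noteq> 0" "bs_exp g = 0" "bs_transl q g > 0"
      using g by (auto simp: oc_cone_def exp_cone_def lex_cone_def split: if_splits)
    then obtain j k where "k > 0" "g = bs_class q (nf_word (2 * j) k (2 * j))"
      using kernel_even_normal_form g_carrier by blast
    thus ?thesis using accept oc_run_transl_pos \<open>q \<noteq> 0\<close> by blast
  qed
qed

lemma one_counter_left_order: "admits_C_left_order one_counter_lang (BS q)"
proof (rule admits_C_left_order_if_cone_lang[where C = one_counter_lang, OF _ _ one_counter_oc_lang])
  show "left_cone (BS q) (oc_cone q)" by (simp add: oc_cone_def left_cone_exp_cone left_cone_lex_cone)
  show "eval_codes q ` oc_lang q = oc_cone q" using oc_lang_sound oc_lang_complete by blast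
qed (auto simp: oc_lang_def)

theorem theorem3p14:
  shows "(\<forall>q::int. admits_C_left_order one_counter_lang (BS q)) \<and>
         (\<forall>q::int. admits_C_left_order regular_lang (BS q) \<longleftrightarrow> q \<ge> -1) \<and>
         (\<forall>q::int. q \<ge> 2 \<longrightarrow>
            (\<forall>R. C_left_order regular_lang (BS q) R \<longrightarrow> induced_by_affine_action q R))"
proof (intro conjI allI impI iffI)
  fix q :: int
  show "admits_C_left_order one_counter_lang (BS q)" by (rule one_counter_left_order)
next
  fix q :: int
  assume "admits_C_left_order regular_lang (BS q)"
  then obtain R where R: "C_left_order regular_lang (BS q) R" by (auto simp: admits_C_left_order_def)
  hence "bs_left_order q R" by (intro bs_left_orderI) (simp add: C_left_order_def)
  thus "q \<ge> -1"
    using regular_cone_not_in_exp_halfspace[OF _ R] bs_left_order.exp_halfspace_of_neg by force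
next
  fix q :: int
  assume "q \<ge> -1"
  then consider "q = -1" | "q = 0" | "q > 0" by linarith
  thus "admits_C_left_order regular_lang (BS q)"
    by cases (simp_all add: regular_left_order_of_minus_one regular_left_order_of_zero regular_left_order_of_pos)
next
  fix q :: int and R
  assume q: "q \<ge> 2" and R: "C_left_order regular_lang (BS q) R"
  hence "bs_left_order q R" by (intro bs_left_orderI) (simp add: C_left_order_def)
  thus "induced_by_affine_action q R"
    using bs_left_order.exp_halfspace_or_induced[OF _ q] regular_cone_not_in_exp_halfspace[OF _ R] q by force
qed

end
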